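(* Let $n\ge1$ and $\pi\in\mathfrak{R}_n$, and write $\Psi_{FZ}(\pi)=(M,w)$ with $M=m_1\cdots m_{2n}$ and $w=w_1\cdots w_{2n}$. Then: - $M$ is a Dyck path, i.e. all its steps are $U$ or $D$; - $(M,w)^{rc}=(M,w)$; - $\Psi(\pi):=(m_1\cdots m_n,\,w_1\cdots w_n)$ lies in $\mathcal{P}_n$. Moreover, the map $\Psi:\mathfrak{R}_n\to\mathcal{P}_n$ is a bijection.
   Context: A permutation $\pi\in\mathfrak{S}_{2n}$ is alternating if $\pi_1>\pi_2<\pi_3>\cdots$. It is rc-invariant if $\pi_{2n+1-i}=2n+1-\pi_i$ for all $i$. Let $\mathfrak{R}_n$ be the set of rc-invariant alternating permutations of $[2n]$. Paths and heights. A two-colored Motzkin path of length $N$ is a word $M=m_1\cdots m_N$ over $\{U,D,H,\tilde H\}$. Here $U=(1,1)$, $D=(1,-1)$, and $H,\tilde H$ are colored copies of $(1,0)$. The path starts at $(0,0)$, stays weakly above the $x$-axis, and ends on it. The height of step $i$ is $h_i(M)=|\{j<i:m_j=U\}|-|\{j<i:m_j=D\}|$. The same definition of height applies to any path. Laguerre histories. A restricted Laguerre history of length $N$ is a pair $(M,w)$, with $w\in\mathbb{N}^N$, such that $0\le w_i\le h_i(M)$ if $m_i\in\{U,H\}$ and $0\le w_i\le h_i(M)-1$ if $m_i\in\{D,\tilde H\}$. Foata–Zeilberger map. For $\pi\in\mathfrak{S}_N$ set $\pi_0=0$, $\pi_{N+1}=+\infty$. For $i\in[N]$ with $\pi_j=i$: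 - $m_i=U$ if $\pi_{j-1}>\pi_j<\pi_{j+1}$; - $m_i=D$ if $\pi_{j-1}<\pi_j>\pi_{j+1}$; - $m_i=H$ if $\pi_{j-1}<\pi_j<\pi_{j+1}$; - $m_i=\tilde H$ if $\pi_{j-1}>\pi_j>\pi_{j+1}$. Also $w_i=|\{k:k<j,\ \pi_k<\pi_j=i<\pi_{k-1}\}|$. Set $\Psi_{FZ}(\pi)=(M,w)$. The rc operation. For a history $(M,w)$ of length $N$, define $(M,w)^{rc}=(M',w')$ by: - $m'_{N+1-i}=m_i$ for $m_i\in\{H,\tilde H\}$, $m'_{N+1-i}=U$ if $m_i=D$, and $m'_{N+1-i}=D$ if $m_i=U$; - $w'_{N+1-i}=h_i(M)-w_i$ if $m_i\in\{U,H\}$, and $w'_{N+1-i}=h_i(M)-1-w_i$ if $m_i\in\{D,\tilde H\}$. Labeled ballot paths. A ballot path of length $n$ is a word $P=p_1\cdots p_n$ over $\{U,D\}$ whose path from $(0,0)$ never goes below the $x$-axis; it may end at any height. A labeled ballot path of length $n$ is a pair $(P,w)$ with $P$ a ballot path of length $n$ and $w\in\mathbb{N}^n$ such that $0\le w_i\le h_i(P)$ if $p_i=U$ and $0\le w_i\le h_i(P)-1$ if $p_i=D$. Let $\mathcal{P}_n$ be the set of labeled ballot paths of length $n$. *)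

theory Defs
  imports "HOL-Combinatorics.Permutations"
begin

text \<open>Permutations of [N] are functions nat => nat with p permutes {1..N};
  positions and values are 1-based.\<close>

definition alternating :: "nat \<Rightarrow> (nat \<Rightarrow> nat) \<Rightarrow> bool" where
  "alternating N p \<longleftrightarrow>
     (\<forall>i\<in>{1..<N}. (odd i \<longrightarrow> p i > p (Suc i)) \<and> (even i \<longrightarrow> p i < p (Suc i)))"

definition rc_invariant :: "nat \<Rightarrow> (nat \<Rightarrow> nat) \<Rightarrow> bool" where
  "rc_invariant N p \<longleftrightarrow> (\<forall>i\<in>{1..N}. p (N + 1 - i) = N + 1 - p i)"

definition RcAlt :: "nat \<Rightarrow> (nat \<Rightarrow> nat) set" where
  "RcAlt n = {p. p permutes {1..2*n} \<and> alternating (2*n) p \<and> rc_invariant (2*n) p}"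

datatype step = U | D | H | Ht

definition height :: "step list \<Rightarrow> nat \<Rightarrow> int" where
  "height M i = int (length (filter (\<lambda>s. s = U) (take (i - 1) M)))
              - int (length (filter (\<lambda>s. s = D) (take (i - 1) M)))"

text \<open>Extended permutation: pi_0 = 0 and pi_(N+1) = +infinity, represented by N+1
  (which exceeds every value of a permutation of [N]).\<close>
definition ext :: "nat \<Rightarrow> (nat \<Rightarrow> nat) \<Rightarrow> nat \<Rightarrow> nat" where
  "ext N p j = (if j = 0 then 0 else if j = N + 1 then N + 1 else p j)"

definition fz_step :: "nat \<Rightarrow> (nat \<Rightarrow> nat) \<Rightarrow> nat \<Rightarrow> step" where
  "fz_step N p i = (let j = inv_into {1..N} p i;
                        a = ext N p (j - 1); b = ext N p j; c = ext N p (j + 1) in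
     if a > b \<and> b < c then U
     else if a < b \<and> b > c then D
     else if a < b \<and> b < c then H
     else Ht)"

definition fz_weight :: "nat \<Rightarrow> (nat \<Rightarrow> nat) \<Rightarrow> nat \<Rightarrow> nat" where
  "fz_weight N p i = (let j = inv_into {1..N} p i in
     card {k \<in> {1..<j}. ext N p k < i \<and> i < ext N p (k - 1)})"

definition PsiFZ :: "nat \<Rightarrow> (nat \<Rightarrow> nat) \<Rightarrow> step list \<times> nat list" where
  "PsiFZ N p = (map (fz_step N p) [1..<N+1], map (fz_weight N p) [1..<N+1])"

fun flip :: "step \<Rightarrow> step" where
  "flip U = D" | "flip D = U" | "flip H = H" | "flip Ht = Ht"

definition rc :: "step list \<times> nat list \<Rightarrow> step list \<times> nat list" where
  "rc Mw = (let M = fst Mw; w = snd Mw; N = length M in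
     (rev (map flip M),
      rev (map (\<lambda>i. if M ! (i - 1) \<in> {U, H}
                     then nat (height M i - int (w ! (i - 1)))
                     else nat (height M i - 1 - int (w ! (i - 1)))) [1..<N+1])))"

definition ballot_path :: "step list \<Rightarrow> bool" where
  "ballot_path P \<longleftrightarrow> set P \<subseteq> {U, D} \<and> (\<forall>i\<in>{1..length P + 1}. height P i \<ge> 0)"

definition LBP :: "nat \<Rightarrow> (step list \<times> nat list) set" where
  "LBP n = {(P, w). length P = n \<and> length w = n \<and> ballot_path P \<and>
     (\<forall>i\<in>{1..n}. (P ! (i - 1) = U \<longrightarrow> int (w ! (i - 1)) \<le> height P i) \<and>
                  (P ! (i - 1) = D \<longrightarrow> int (w ! (i - 1)) \<le> height P i - 1))}"

definition Psi :: "nat \<Rightarrow> (nat \<Rightarrow> nat) \<Rightarrow> step list \<times> nat list" where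
  "Psi n p = (take n (fst (PsiFZ (2*n) p)), take n (snd (PsiFZ (2*n) p)))"

end

theory Submission
  imports Defs
begin

text \<open>An alternating permutation of [N] is the same as the list of its descent pairs
  (pi_1, pi_2), (pi_3, pi_4), ...: each pair is a peak above a valley, and each valley lies below
  the next peak. Read the values t = 1, ..., N in increasing order and keep track of the pairs
  restricted to the values seen so far: a list of arcs, some of them still open (valley seen,
  peak not yet). A valley opens a new arc (a U step), a peak closes one (a D step), and the
  Foata--Zeilberger weight of t is the number of open arcs to the left of the place where this
  happens. Each step can be undone, so the Foata--Zeilberger map is a bijection from alternating
  permutations onto Dyck histories.

  Reverse-complementing the permutation reverses the pair list and complements its values, which
  on histories is exactly the rc operation. Hence rc-invariant permutations correspond to rc-fixed
  Dyck histories. Such a history is determined by its first half, and every labeled ballot path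
  becomes one by appending its rc image.\<close>

section \<open>Heights and the rc operation\<close>

lemma height_one[simp]: "height M (Suc 0) = 0"
  by (simp add: height_def)

lemma height_Suc: "1 \<le> t \<Longrightarrow> t \<le> length M \<Longrightarrow>
  height M (Suc t) = height M t + (if M ! (t-1) = U then 1 else if M ! (t-1) = D then -1 else 0)"
proof -
  assume a: "1 \<le> t" "t \<le> length M"
  have "take t M = take (t-1) M @ [M ! (t-1)]"
    using a take_Suc_conv_app_nth[of "t-1" M] by simp
  then show ?thesis unfolding height_def using a by auto
qed

lemma flip_flip[simp]: "flip (flip x) = x" by (cases x) auto

lemma flip_eqU[simp]: "(flip x = U) = (x = D)" by (cases x) auto

lemma flip_eqD[simp]: "(flip x = D) = (x = U)" by (cases x) auto

definition count_U :: "step list \<Rightarrow> nat" where "count_U xs = length (filter (\<lambda>s. s = U) xs)"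

definition count_D :: "step list \<Rightarrow> nat" where "count_D xs = length (filter (\<lambda>s. s = D) xs)"

lemma height_count: "height M i = int (count_U (take (i - 1) M)) - int (count_D (take (i - 1) M))"
  by (simp add: height_def count_U_def count_D_def)

lemma count_U_simps[simp]: "count_U (xs @ ys) = count_U xs + count_U ys"
    "count_U (rev xs) = count_U xs" "count_U (map flip xs) = count_D xs"
  by (auto simp: count_U_def count_D_def rev_filter[symmetric] filter_map o_def)

lemma count_D_simps[simp]: "count_D (xs @ ys) = count_D xs + count_D ys"
    "count_D (rev xs) = count_D xs" "count_D (map flip xs) = count_U xs"
  by (auto simp: count_U_def count_D_def rev_filter[symmetric] filter_map o_def)

lemma height_take: "i \<le> Suc n \<Longrightarrow> height (take n M) i = height M i"
  by (simp add: height_def min_def)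

lemma height_append: "i \<le> Suc (length P) \<Longrightarrow> height (P @ Q) i = height P i"
  by (simp add: height_def)

lemma height_append_mirror:
  assumes "k \<le> length P"
  shows "height (P @ rev (map flip P)) (2 * length P + 1 - k) = height P (Suc k)"
proof -
  have "take (2 * length P - k) (P @ rev (map flip P)) = P @ rev (map flip (drop k P))"
    using assms by (simp add: take_rev drop_map)
  moreover have "count_U P = count_U (take k P) + count_U (drop k P)"
    "count_D P = count_D (take k P) + count_D (drop k P)"
    by (metis append_take_drop_id count_U_simps(1)) (metis append_take_drop_id count_D_simps(1))
  ultimately show ?thesis by (simp add: height_count)
qed

lemma nth_U_or_D: "set xs \<subseteq> {U, D} \<Longrightarrow> i < length xs \<Longrightarrow> xs ! i = U \<or> xs ! i = D"
  using nth_mem by blast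

text \<open>\<open>rc_weight Hx i\<close> is the new weight that rc puts at position N + 1 - i.\<close>

definition rc_weight :: "step list \<times> nat list \<Rightarrow> nat \<Rightarrow> nat" where
  "rc_weight Hx i = (if fst Hx ! (i - 1) \<in> {U, H} then nat (height (fst Hx) i - int (snd Hx ! (i - 1)))
             else nat (height (fst Hx) i - 1 - int (snd Hx ! (i - 1))))"

lemma rc_eq: "rc Hx = (rev (map flip (fst Hx)), rev (map (rc_weight Hx) [1..<length (fst Hx) + 1]))"
  unfolding rc_def Let_def rc_weight_def by simp

lemma rc_fixed_nth:
  assumes "length (fst Hx) = N" "length (snd Hx) = N" "rc Hx = Hx" "q < N"
  shows "fst Hx ! q = flip (fst Hx ! (N - 1 - q)) \<and> snd Hx ! q = rc_weight Hx (N - q)"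
proof -
  have e1: "fst Hx = rev (map flip (fst Hx))" and e2: "snd Hx = rev (map (rc_weight Hx) [1..<N + 1])"
    using assms(3) rc_eq[of Hx] assms(1) by (metis fst_conv snd_conv)+
  have "fst Hx ! q = rev (map flip (fst Hx)) ! q" using e1 by simp
  also have "\<dots> = flip (fst Hx ! (N - 1 - q))" using assms(1,4) by (simp add: rev_nth)
  finally have a: "fst Hx ! q = flip (fst Hx ! (N - 1 - q))" .
  have "snd Hx ! q = rev (map (rc_weight Hx) [1..<N + 1]) ! q" using e2 by simp
  also have "\<dots> = rc_weight Hx (N - q)" using assms(4) by (simp add: rev_nth Suc_diff_Suc del: upt_Suc)
  finally show ?thesis using a by simp
qed

lemma rc_fixed_eq_if_take_eq:
  assumes l: "length (fst H1) = 2*n" "length (snd H1) = 2*n" "length (fst H2) = 2*n" "length (snd H2) = 2*n"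
    and r: "rc H1 = H1" "rc H2 = H2"
    and tk: "take n (fst H1) = take n (fst H2)" "take n (snd H1) = take n (snd H2)"
  shows "H1 = H2"
proof -
  have low: "fst H1 ! q = fst H2 ! q" "snd H1 ! q = snd H2 ! q" if "q < n" for q
    using tk that by (metis nth_take)+
  have M: "fst H1 = fst H2"
  proof (rule nth_equalityI)
    fix q assume "q < length (fst H1)"
    then show "fst H1 ! q = fst H2 ! q"
      using rc_fixed_nth[OF l(1,2) r(1), of q] rc_fixed_nth[OF l(3,4) r(2), of q]
        low(1)[of q] low(1)[of "2*n - 1 - q"] l
      by (cases "q < n") auto
  qed (use l in simp)
  have W: "snd H1 = snd H2"
  proof (rule nth_equalityI)
    fix q assume "q < length (snd H1)"
    then show "snd H1 ! q = snd H2 ! q"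
      using rc_fixed_nth[OF l(1,2) r(1), of q] rc_fixed_nth[OF l(3,4) r(2), of q]
        low(2)[of q] low(2)[of "2*n - q - 1"] l M
      by (cases "q < n") (auto simp: rc_weight_def)
  qed (use l in simp)
  show ?thesis using M W by (simp add: prod_eq_iff)
qed

section \<open>Lists of open and closed arcs\<close>

text \<open>A state of the construction: \<open>(None, b)\<close> is an arc opened at the valley b and not yet
  closed, \<open>(Some a, b)\<close> a finished pair with peak a and valley b.\<close>

type_synonym arcs = "(nat option \<times> nat) list"

definition open_count :: "arcs \<Rightarrow> nat" where
  "open_count S = length (filter (\<lambda>x. fst x = None) S)"

lemma open_count_simps[simp]: "open_count [] = 0" "open_count (x#xs) = (if fst x = None then Suc (open_count xs) else open_count xs)"
  "open_count (xs @ ys) = open_count xs + open_count ys"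
  by (auto simp: open_count_def)

fun insert_open :: "nat \<Rightarrow> (nat option \<times> nat) \<Rightarrow> arcs \<Rightarrow> arcs" where
  "insert_open w x [] = [x]"
| "insert_open w x (y#ys) = (if fst y = None then (if w = 0 then x#y#ys else y # insert_open (w-1) x ys)
                      else y # insert_open w x ys)"

fun close_open :: "nat \<Rightarrow> nat \<Rightarrow> arcs \<Rightarrow> arcs" where
  "close_open w t [] = []"
| "close_open w t (y#ys) = (if fst y = None then (if w = 0 then (Some t, snd y)#ys else y # close_open (w-1) t ys)
                      else y # close_open w t ys)"

definition arc_step :: "step \<Rightarrow> nat \<Rightarrow> nat \<Rightarrow> arcs \<Rightarrow> arcs" where
  "arc_step s w t S = (if s = U then insert_open w (None, t) S else close_open w t S)"

lemma insert_open_at: "open_count X = w \<Longrightarrow> (Y = [] \<or> fst (hd Y) = None) \<Longrightarrow>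
    insert_open w x (X @ Y) = X @ x # Y"
proof (induction X arbitrary: w)
  case Nil
  then show ?case by (cases Y) auto
next
  case (Cons a X)
  then show ?case by (cases "fst a = None") auto
qed

lemma close_open_at: "open_count X = w \<Longrightarrow> close_open w t (X @ (None, b) # Y) = X @ (Some t, b) # Y"
proof (induction X arbitrary: w)
  case Nil
  then show ?case by auto
next
  case (Cons a X)
  then show ?case by (cases "fst a = None") auto
qed

lemma split_open_prefix: "w \<le> open_count S \<Longrightarrow>
    \<exists>X Y. S = X @ Y \<and> open_count X = w \<and> (Y = [] \<or> fst (hd Y) = None)"
proof (induction S arbitrary: w)
  case Nil
  then show ?case by auto
next
  case (Cons a S)
  show ?case
  proof (cases "fst a = None")
    case True
    show ?thesis
    proof (cases w)
      case 0
      then show ?thesis using True by (intro exI[of _ "[]"] exI[of _ "a#S"]) auto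
    next
      case (Suc v)
      then have "v \<le> open_count S" using Cons.prems True by simp
      then obtain X Y where "S = X @ Y" "open_count X = v" "Y = [] \<or> fst (hd Y) = None"
        using Cons.IH[of v] by blast
      then show ?thesis using True Suc by (intro exI[of _ "a#X"] exI[of _ Y]) auto
    qed
  next
    case False
    have "w \<le> open_count S" using Cons.prems False by simp
    then obtain X Y where "S = X @ Y" "open_count X = w" "Y = [] \<or> fst (hd Y) = None"
      using Cons.IH[of w] by blast
    then show ?thesis using False by (intro exI[of _ "a#X"] exI[of _ Y]) auto
  qed
qed

lemma split_open_at: "w < open_count S \<Longrightarrow> \<exists>X b Y. S = X @ (None, b) # Y \<and> open_count X = w"
proof (induction S arbitrary: w)
  case Nil
  then show ?case by auto
next
  case (Cons a S)
  show ?case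
  proof (cases "fst a = None")
    case True
    show ?thesis
    proof (cases w)
      case 0
      then show ?thesis using True by (intro exI[of _ "[]"] exI[of _ "snd a"] exI[of _ S])
          (cases a, auto)
    next
      case (Suc v)
      then have "v < open_count S" using Cons.prems True by simp
      then obtain X b Y where "S = X @ (None, b) # Y" "open_count X = v"
        using Cons.IH[of v] by blast
      then show ?thesis using True Suc by (intro exI[of _ "a#X"] exI[of _ b] exI[of _ Y]) auto
    qed
  next
    case False
    have "w < open_count S" using Cons.prems False by simp
    then obtain X b Y where "S = X @ (None, b) # Y" "open_count X = w"
      using Cons.IH[of w] by blast
    then show ?thesis using False by (intro exI[of _ "a#X"] exI[of _ b] exI[of _ Y]) auto
  qed
qed

lemma insert_open_cases: "\<exists>X Y. S = X @ Y \<and> insert_open w x S = X @ x # Y"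
proof (induction S arbitrary: w)
  case Nil
  then show ?case by auto
next
  case (Cons a S)
  show ?case
  proof (cases "fst a = None \<and> w = 0")
    case True
    then show ?thesis by (intro exI[of _ "[]"] exI[of _ "a#S"]) auto
  next
    case False
    then obtain X Y where "S = X @ Y" "insert_open (if fst a = None then w - 1 else w) x S = X @ x # Y"
      using Cons.IH by blast
    then show ?thesis using False by (intro exI[of _ "a#X"] exI[of _ Y]) (auto split: if_splits)
  qed
qed

lemma close_open_cases: "close_open w t S = S
    \<or> (\<exists>X b Y. S = X @ (None, b) # Y \<and> close_open w t S = X @ (Some t, b) # Y)"
proof (induction S arbitrary: w)
  case Nil
  then show ?case by auto
next
  case (Cons a S)
  show ?case
  proof (cases "fst a = None \<and> w = 0")
    case True
    then show ?thesis by (intro disjI2 exI[of _ "[]"] exI[of _ "snd a"] exI[of _ S]) (cases a, auto)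
  next
    case False
    from Cons.IH[of "if fst a = None then w - 1 else w"] show ?thesis
    proof
      assume "close_open (if fst a = None then w - 1 else w) t S = S"
      then show ?thesis using False by (auto split: if_splits)
    next
      assume "\<exists>X b Y. S = X @ (None, b) # Y \<and> close_open (if fst a = None then w - 1 else w) t S = X @ (Some t, b) # Y"
      then obtain X b Y where "S = X @ (None, b) # Y" "close_open (if fst a = None then w - 1 else w) t S = X @ (Some t, b) # Y"
        by blast
      then show ?thesis using False by (intro disjI2 exI[of _ "a#X"] exI[of _ b] exI[of _ Y]) auto
    qed
  qed
qed

lemma open_count_insert_open: "open_count (insert_open w (None, t) S) = Suc (open_count S)"
  using insert_open_cases[of S w "(None, t)"] by auto

lemma open_count_close_open: "w < open_count S \<Longrightarrow> Suc (open_count (close_open w t S)) = open_count S"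
  using split_open_at[of w S] close_open_at[of _ w t] by fastforce

lemma append_Cons_first_eq: "X @ x # Y = X' @ x' # Y' \<Longrightarrow> P x \<Longrightarrow> P x'
    \<Longrightarrow> \<forall>z\<in>set X. \<not> P z \<Longrightarrow> \<forall>z\<in>set X'. \<not> P z \<Longrightarrow> X = X'"
proof (induction X arbitrary: X')
  case Nil
  then show ?case by (cases X') auto
next
  case (Cons a X)
  then show ?case by (cases X') auto
qed

lemma insert_open_inj:
  assumes w: "w \<le> open_count S" "w' \<le> open_count S" and fresh: "(None, t) \<notin> set S"
    and eq: "insert_open w (None, t) S = insert_open w' (None, t) S"
  shows "w = w'"
proof -
  obtain X Y where XY: "S = X @ Y" "open_count X = w" "Y = [] \<or> fst (hd Y) = None"
    using split_open_prefix[OF w(1)] by blast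
  obtain X' Y' where XY': "S = X' @ Y'" "open_count X' = w'" "Y' = [] \<or> fst (hd Y') = None"
    using split_open_prefix[OF w(2)] by blast
  have "X @ (None, t) # Y = X' @ (None, t) # Y'"
    using eq insert_open_at[OF XY(2,3)] insert_open_at[OF XY'(2,3)] XY(1) XY'(1) by simp
  moreover have "\<forall>z\<in>set X. z \<noteq> (None, t)" using fresh XY(1) by auto
  moreover have "\<forall>z\<in>set X'. z \<noteq> (None, t)" using fresh XY'(1) by auto
  ultimately have "X = X'" using append_Cons_first_eq[of X _ Y X' _ Y' "\<lambda>z. z = (None, t)"] by blast
  then show ?thesis using XY XY' by simp
qed

lemma close_open_inj:
  assumes w: "w < open_count S" "w' < open_count S" and fresh: "\<forall>x\<in>set S. fst x \<noteq> Some t"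
    and eq: "close_open w t S = close_open w' t S"
  shows "w = w'"
proof -
  obtain X b Y where XY: "S = X @ (None, b) # Y" "open_count X = w"
    using split_open_at[OF w(1)] by blast
  obtain X' b' Y' where XY': "S = X' @ (None, b') # Y'" "open_count X' = w'"
    using split_open_at[OF w(2)] by blast
  have "X @ (Some t, b) # Y = X' @ (Some t, b') # Y'"
    using eq close_open_at[OF XY(2)] close_open_at[OF XY'(2)] XY(1) XY'(1) by metis
  moreover have "\<forall>z\<in>set X. fst z \<noteq> Some t" using fresh XY(1) by auto
  moreover have "\<forall>z\<in>set X'. fst z \<noteq> Some t" using fresh XY'(1) by auto
  ultimately have "X = X'" using append_Cons_first_eq[of X _ Y X' _ Y' "\<lambda>z. fst z = Some t"] by auto
  then show ?thesis using XY XY' by simp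
qed

lemma arc_step_inj:
  assumes fits: "(s = U \<and> w \<le> open_count S) \<or> (s = D \<and> w < open_count S)"
    and fits': "(s' = U \<and> w' \<le> open_count S) \<or> (s' = D \<and> w' < open_count S)"
    and fresh: "\<forall>x\<in>set S. snd x \<noteq> t \<and> fst x \<noteq> Some t"
    and eq: "arc_step s w t S = arc_step s' w' t S"
  shows "s = s' \<and> w = w'"
proof -
  have "length (insert_open v (None, t) S) = Suc (length S)" for v
    using insert_open_cases[of S v "(None, t)"] by (metis length_Cons length_append add_Suc_right)
  moreover have "length (close_open v t S) = length S" for v
    using close_open_cases[of v t S] by (metis length_Cons length_append)
  ultimately have "s = s'" using eq fits fits' unfolding arc_step_def by (metis n_not_Suc_n)
  moreover have "(None, t) \<notin> set S" using fresh by auto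
  ultimately show ?thesis
    using fits fits' fresh eq insert_open_inj[of w S w' t] close_open_inj[of w S w' t]
    unfolding arc_step_def by auto
qed

section \<open>Alternating pair lists and their histories\<close>

fun pair_vals :: "(nat \<times> nat) list \<Rightarrow> nat list" where
  "pair_vals [] = []" | "pair_vals ((a,b)#ps) = a # b # pair_vals ps"

lemma pair_vals_append[simp]: "pair_vals (xs @ ys) = pair_vals xs @ pair_vals ys"
  by (induction xs rule: pair_vals.induct) auto

lemma set_pair_vals: "set (pair_vals ps) = fst ` set ps \<union> snd ` set ps"
  by (induction ps rule: pair_vals.induct) auto

lemma length_pair_vals[simp]: "length (pair_vals ps) = 2 * length ps"
  by (induction ps rule: pair_vals.induct) auto

text \<open>The descent pairs of an alternating permutation of [N]; see \<open>perm_pairs\<close> below.\<close>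

definition alt_pairs :: "nat \<Rightarrow> (nat \<times> nat) list \<Rightarrow> bool" where
  "alt_pairs N ps \<longleftrightarrow> successively (\<lambda>x y. snd x < fst y) ps \<and> (\<forall>x\<in>set ps. snd x < fst x)
     \<and> distinct (pair_vals ps) \<and> set (pair_vals ps) = {1..N}"

lemma alt_pairs_range: "alt_pairs N ps \<Longrightarrow> x \<in> set ps \<Longrightarrow> fst x \<in> {1..N} \<and> snd x \<in> {1..N}"
  unfolding alt_pairs_def set_pair_vals by blast

lemma alt_pairs_range': "alt_pairs N ps \<Longrightarrow> (a,b) \<in> set ps \<Longrightarrow>
    1 \<le> a \<and> a \<le> N \<and> 1 \<le> b \<and> b \<le> N"
  using alt_pairs_range[of N ps "(a,b)"] by simp

definition straddle_count :: "nat \<Rightarrow> (nat \<times> nat) list \<Rightarrow> nat" where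
  "straddle_count t xs = length (filter (\<lambda>(a,b). b < t \<and> t < a) xs)"

definition pair_weight :: "(nat \<times> nat) list \<Rightarrow> nat \<Rightarrow> nat" where
  "pair_weight ps t = straddle_count t (takeWhile (\<lambda>(a,b). a \<noteq> t \<and> b \<noteq> t) ps)"

lemma straddle_count_rev[simp]: "straddle_count t (rev xs) = straddle_count t xs"
  by (simp add: straddle_count_def rev_filter[symmetric])

text \<open>The state of the construction after reading the values below t.\<close>

definition arcs_below :: "nat \<Rightarrow> (nat \<times> nat) list \<Rightarrow> arcs" where
  "arcs_below t ps = map (\<lambda>(a,b). (if a < t then Some a else None, b)) (filter (\<lambda>(a,b). b < t) ps)"

lemma arcs_below_simps[simp]: "arcs_below t [] = []" "arcs_below t (xs @ ys) = arcs_below t xs @ arcs_below t ys"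
  "arcs_below t ((a,b) # ys) = (if b < t then (if a < t then Some a else None, b) # arcs_below t ys else arcs_below t ys)"
  by (auto simp: arcs_below_def)

lemma arcs_below_Suc: "t \<notin> set (pair_vals xs) \<Longrightarrow> arcs_below (Suc t) xs = arcs_below t xs"
  by (induction xs rule: pair_vals.induct) auto

lemma open_count_arcs_below_straddle: "t \<notin> set (pair_vals xs) \<Longrightarrow>
    open_count (arcs_below t xs) = straddle_count t xs"
  by (induction xs rule: pair_vals.induct) (auto simp: straddle_count_def)

lemma arcs_below_hd_open: "successively (\<lambda>x y. snd x < fst y) (p # ys) \<Longrightarrow> t \<le> snd p \<Longrightarrow>
   arcs_below t ys = [] \<or> fst (hd (arcs_below t ys)) = None"
proof (induction ys arbitrary: p)
  case Nil
  then show ?case by simp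
next
  case (Cons y ys)
  obtain a b where y: "y = (a,b)" by force
  have "snd p < a" using Cons.prems y by simp
  show ?case
  proof (cases "b < t")
    case True
    then show ?thesis using y \<open>snd p < a\<close> Cons.prems by auto
  next
    case False
    have "successively (\<lambda>x y. snd x < fst y) (y # ys)" using Cons.prems by simp
    then show ?thesis using Cons.IH[of y] False y by auto
  qed
qed

lemma alt_pairs_split_at:
  assumes g: "alt_pairs N ps" and t: "t \<in> {1..N}"
  obtains xs a b ys where "ps = xs @ (a,b) # ys" "t = a \<or> t = b" "b < a"
    "t \<notin> set (pair_vals xs)" "t \<notin> set (pair_vals ys)" "successively (\<lambda>x y. snd x < fst y) ((a,b) # ys)"
proof -
  have "t \<in> set (pair_vals ps)" using assms unfolding alt_pairs_def by auto
  then obtain p where p: "p \<in> set ps" "t = fst p \<or> t = snd p" unfolding set_pair_vals by auto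
  then obtain xs ys where ps: "ps = xs @ p # ys" by (meson split_list)
  obtain a b where ab: "p = (a,b)" by force
  have "distinct (pair_vals ps)" "b < a" "successively (\<lambda>x y. snd x < fst y) ((a,b) # ys)"
    using g p(1) ps ab unfolding alt_pairs_def by (auto simp: successively_append_iff)
  then show ?thesis using that ps ab p by auto
qed

lemma pair_weight_split:
  assumes "t \<notin> set (pair_vals xs)" "t = a \<or> t = b"
  shows "pair_weight (xs @ (a,b) # ys) t = straddle_count t xs"
proof -
  have "\<forall>x\<in>set xs. (\<lambda>(a,b). a \<noteq> t \<and> b \<noteq> t) x" using assms(1) by (force simp: set_pair_vals)
  then show ?thesis unfolding pair_weight_def using assms(2) by (auto simp: takeWhile_append2)
qed

lemma pair_weight_rev_split:
  "t \<notin> set (pair_vals ys) \<Longrightarrow> t = a \<or> t = b \<Longrightarrow>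
    pair_weight (rev (xs @ (a,b) # ys)) t = straddle_count t ys"
  using pair_weight_split[of t "rev ys" a b "rev xs"] by (simp add: set_pair_vals)

lemma open_count_arcs_below:
  assumes g: "alt_pairs N ps" and t: "t \<in> {1..N}"
  shows "open_count (arcs_below t ps)
    = pair_weight ps t + (if t \<in> snd ` set ps then 0 else 1) + pair_weight (rev ps) t"
proof -
  obtain xs a b ys where ps: "ps = xs @ (a,b) # ys" and tab: "t = a \<or> t = b" and ba: "b < a"
    and nx: "t \<notin> set (pair_vals xs)" and ny: "t \<notin> set (pair_vals ys)"
    and "successively (\<lambda>x y. snd x < fst y) ((a,b) # ys)"
    by (rule alt_pairs_split_at[OF g t])
  note counts = pair_weight_split[OF nx tab] pair_weight_rev_split[OF ny tab]
    open_count_arcs_below_straddle[OF nx] open_count_arcs_below_straddle[OF ny]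
  show ?thesis
  proof (cases "t = b")
    case True
    then have "t \<in> snd ` set ps" using ps by force
    then show ?thesis using True ps counts by simp
  next
    case False
    then have "t = a" "t \<notin> snd ` set ps" using ps tab ba nx ny by (auto simp: set_pair_vals)
    then show ?thesis using ba ps counts by simp
  qed
qed

lemma arcs_below_Suc_eq_arc_step:
  assumes g: "alt_pairs N ps" and t: "t \<in> {1..N}"
  shows "arcs_below (Suc t) ps = arc_step (if t \<in> snd ` set ps then U else D) (pair_weight ps t) t (arcs_below t ps)"
proof -
  obtain xs a b ys where ps: "ps = xs @ (a,b) # ys" and tab: "t = a \<or> t = b" and ba: "b < a"
    and nx: "t \<notin> set (pair_vals xs)" and ny: "t \<notin> set (pair_vals ys)"
    and succ: "successively (\<lambda>x y. snd x < fst y) ((a,b) # ys)"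
    by (rule alt_pairs_split_at[OF g t])
  have w: "pair_weight ps t = open_count (arcs_below t xs)"
    using pair_weight_split[OF nx tab] open_count_arcs_below_straddle[OF nx] ps by simp
  note below_Suc = arcs_below_Suc[OF nx] arcs_below_Suc[OF ny]
  show ?thesis
  proof (cases "t = b")
    case True
    have "t \<in> snd ` set ps" using ps True by force
    moreover have "arcs_below t ys = [] \<or> fst (hd (arcs_below t ys)) = None"
      using arcs_below_hd_open[OF succ] True by simp
    ultimately show ?thesis
      using ps True ba below_Suc insert_open_at[OF w[symmetric]] by (simp add: arc_step_def)
  next
    case False
    then have "t = a" "t \<notin> snd ` set ps" using ps tab ba nx ny by (auto simp: set_pair_vals)
    then show ?thesis
      using ps ba below_Suc close_open_at[OF w[symmetric]] by (simp add: arc_step_def)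
  qed
qed

lemma open_count_arcs_below_Suc:
  assumes g: "alt_pairs N ps" and t: "t \<in> {1..N}"
  shows "int (open_count (arcs_below (Suc t) ps))
    = int (open_count (arcs_below t ps)) + (if t \<in> snd ` set ps then 1 else -1)"
  using arcs_below_Suc_eq_arc_step[OF g t] open_count_arcs_below[OF g t]
    open_count_insert_open open_count_close_open[of "pair_weight ps t" "arcs_below t ps" t]
  by (auto simp: arc_step_def)

definition pair_history :: "nat \<Rightarrow> (nat \<times> nat) list \<Rightarrow> step list \<times> nat list" where
  "pair_history N ps = (map (\<lambda>t. if t \<in> snd ` set ps then U else D) [1..<N+1], map (pair_weight ps) [1..<N+1])"

lemma nth_pair_history: "i < N \<Longrightarrow> fst (pair_history N ps) ! i = (if Suc i \<in> snd ` set ps then U else D)"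
  "i < N \<Longrightarrow> snd (pair_history N ps) ! i = pair_weight ps (Suc i)"
  by (simp_all add: pair_history_def del: upt_Suc)

lemma length_pair_history[simp]: "length (fst (pair_history N ps)) = N" "length (snd (pair_history N ps)) = N"
  by (auto simp: pair_history_def)

fun build_arcs :: "step list \<times> nat list \<Rightarrow> nat \<Rightarrow> arcs" where
  "build_arcs Hi 0 = []"
| "build_arcs Hi (Suc k) = arc_step (fst Hi ! k) (snd Hi ! k) (Suc k) (build_arcs Hi k)"

lemma arcs_below_one: "alt_pairs N ps \<Longrightarrow> arcs_below (Suc 0) ps = []"
proof -
  assume g: "alt_pairs N ps"
  have "filter (\<lambda>(a,b). b < Suc 0) ps = []"
    using alt_pairs_range[OF g] by (force simp: filter_empty_conv)
  then show ?thesis unfolding arcs_below_def by simp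
qed

lemma arcs_below_eq_build: "alt_pairs N ps \<Longrightarrow> t \<le> N \<Longrightarrow>
    arcs_below (Suc t) ps = build_arcs (pair_history N ps) t"
proof (induction t)
  case 0
  then show ?case using arcs_below_one by simp
next
  case (Suc t)
  have "Suc t \<in> {1..N}" using Suc.prems by simp
  note k = arcs_below_Suc_eq_arc_step[OF Suc.prems(1) this]
  have "fst (pair_history N ps) ! t = (if Suc t \<in> snd ` set ps then U else D)"
    "snd (pair_history N ps) ! t = pair_weight ps (Suc t)" using Suc.prems nth_pair_history by auto
  then show ?case using k Suc by simp
qed

lemma arcs_below_all: "alt_pairs N ps \<Longrightarrow> arcs_below (Suc N) ps = map (\<lambda>(a,b). (Some a, b)) ps"
proof -
  assume g: "alt_pairs N ps"
  have "filter (\<lambda>(a,b). b < Suc N) ps = ps"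
    by (auto simp: filter_id_conv dest: alt_pairs_range'[OF g])
  moreover have "map (\<lambda>(a,b). (if a < Suc N then Some a else None, b)) ps = map (\<lambda>(a,b). (Some a, b)) ps"
    by (auto dest: alt_pairs_range'[OF g])
  ultimately show ?thesis unfolding arcs_below_def by simp
qed

lemma pair_history_inj:
  assumes g: "alt_pairs N ps" "alt_pairs N qs" and eq: "pair_history N ps = pair_history N qs"
  shows "ps = qs"
proof -
  have "arcs_below (Suc N) ps = arcs_below (Suc N) qs"
    using arcs_below_eq_build[OF g(1), of N] arcs_below_eq_build[OF g(2), of N] eq by simp
  then have "map (\<lambda>(a,b). (Some a, b)) ps = map (\<lambda>(a,b). (Some a, b)) qs"
    using arcs_below_all g by simp
  moreover have "inj (\<lambda>(a::nat,b::nat). (Some a, b))" by (auto simp: inj_def)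
  ultimately show ?thesis by simp
qed

lemma height_pair_history:
  assumes g: "alt_pairs N ps"
  shows "1 \<le> t \<Longrightarrow> t \<le> Suc N \<Longrightarrow> height (fst (pair_history N ps)) t = int (open_count (arcs_below t ps))"
proof (induction t)
  case (Suc t)
  show ?case
  proof (cases "t = 0")
    case True
    then show ?thesis using arcs_below_one[OF g] by simp
  next
    case False
    then have t: "t \<in> {1..N}" using Suc.prems by simp
    have "height (fst (pair_history N ps)) (Suc t)
        = height (fst (pair_history N ps)) t + (if t \<in> snd ` set ps then 1 else -1)"
      using height_Suc[of t "fst (pair_history N ps)"] t nth_pair_history(1)[of "t - 1" N ps]
      by (cases "t \<in> snd ` set ps") auto
    then show ?thesis using Suc.IH False Suc.prems open_count_arcs_below_Suc[OF g t] by simp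
  qed
qed simp

definition dyck_history :: "nat \<Rightarrow> step list \<times> nat list \<Rightarrow> bool" where
  "dyck_history N Hi \<longleftrightarrow> length (fst Hi) = N \<and> length (snd Hi) = N \<and> set (fst Hi) \<subseteq> {U, D}
     \<and> height (fst Hi) (Suc N) = 0
     \<and> (\<forall>i\<in>{1..N}. (fst Hi ! (i-1) = U \<longrightarrow> int (snd Hi ! (i-1)) \<le> height (fst Hi) i)
                  \<and> (fst Hi ! (i-1) = D \<longrightarrow> int (snd Hi ! (i-1)) \<le> height (fst Hi) i - 1))"

lemma dyck_history_pair_history:
  assumes g: "alt_pairs N ps"
  shows "dyck_history N (pair_history N ps)"
proof -
  let ?M = "fst (pair_history N ps)" and ?W = "snd (pair_history N ps)"
  have "set ?M \<subseteq> {U, D}" by (auto simp: pair_history_def)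
  moreover have "height ?M (Suc N) = 0"
    using height_pair_history[OF g, of "Suc N"] arcs_below_all[OF g]
    by (simp add: open_count_def filter_empty_conv split: prod.splits)
  moreover have "(?M ! (i-1) = U \<longrightarrow> int (?W ! (i-1)) \<le> height ?M i)
      \<and> (?M ! (i-1) = D \<longrightarrow> int (?W ! (i-1)) \<le> height ?M i - 1)" if i: "i \<in> {1..N}" for i
    using open_count_arcs_below[OF g i] height_pair_history[OF g, of i] i nth_pair_history[of "i-1" N ps]
    by (cases "i \<in> snd ` set ps") auto
  ultimately show ?thesis unfolding dyck_history_def by simp
qed

section \<open>Every Dyck history comes from an alternating pair list\<close>

definition arc_vals :: "arcs \<Rightarrow> nat list" where
  "arc_vals S = concat (map (\<lambda>(a,b). case a of None \<Rightarrow> [b] | Some a' \<Rightarrow> [a',b]) S)"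

lemma arc_vals_simps[simp]: "arc_vals [] = []" "arc_vals (xs @ ys) = arc_vals xs @ arc_vals ys"
  "arc_vals ((None, b) # ys) = b # arc_vals ys" "arc_vals ((Some a, b) # ys) = a # b # arc_vals ys"
  by (auto simp: arc_vals_def)

definition arc_rel :: "(nat option \<times> nat) \<Rightarrow> (nat option \<times> nat) \<Rightarrow> bool" where
  "arc_rel x y = (case fst y of None \<Rightarrow> True | Some a \<Rightarrow> snd x < a)"

definition arcs_sorted :: "arcs \<Rightarrow> bool" where
  "arcs_sorted S \<longleftrightarrow> successively arc_rel S \<and> (\<forall>x\<in>set S. arc_rel x x)"

lemma arc_vals_mem: "x \<in> set S \<Longrightarrow>
    snd x \<in> set (arc_vals S) \<and> (\<forall>a. fst x = Some a \<longrightarrow> a \<in> set (arc_vals S))"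
proof (induction S)
  case Nil
  then show ?case by simp
next
  case (Cons y S)
  obtain a b where y: "y = (a,b)" by force
  show ?case using Cons y by (cases a) auto
qed

definition arcs_wf :: "nat \<Rightarrow> arcs \<Rightarrow> bool" where
  "arcs_wf k S \<longleftrightarrow> distinct (arc_vals S) \<and> set (arc_vals S) = {1..k} \<and> arcs_sorted S"

lemma arcs_wf_insert_open:
  assumes wf: "arcs_wf k S" and w: "w \<le> open_count S"
  shows "arcs_wf (Suc k) (insert_open w (None, Suc k) S)"
proof -
  obtain X Y where XY: "S = X @ Y" "open_count X = w" "Y = [] \<or> fst (hd Y) = None"
    using split_open_prefix[OF w] by blast
  have new: "insert_open w (None, Suc k) S = X @ (None, Suc k) # Y"
    using insert_open_at[OF XY(2,3)] XY(1) by simp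
  have "set (arc_vals X) \<union> set (arc_vals Y) = {1..k}" using wf XY(1) unfolding arcs_wf_def by simp
  then have "Suc k \<notin> set (arc_vals X)" "Suc k \<notin> set (arc_vals Y)"
    by (metis Un_iff atLeastAtMost_iff Suc_n_not_le_n)+
  moreover have "successively arc_rel X" "successively arc_rel Y"
    "\<forall>x\<in>set X. arc_rel x x" "\<forall>x\<in>set Y. arc_rel x x"
    using wf XY(1) unfolding arcs_wf_def arcs_sorted_def by (auto simp: successively_append_iff)
  moreover have "Y = [] \<or> arc_rel (None, Suc k) (hd Y)" using XY(3) by (auto simp: arc_rel_def)
  ultimately show ?thesis using wf XY(1) unfolding new arcs_wf_def arcs_sorted_def
    by (auto simp: successively_append_iff successively_Cons arc_rel_def)
qed

lemma arcs_wf_close_open: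
  assumes wf: "arcs_wf k S" and w: "w < open_count S"
  shows "arcs_wf (Suc k) (close_open w (Suc k) S)"
proof -
  obtain X b Y where XY: "S = X @ (None, b) # Y" "open_count X = w"
    using split_open_at[OF w] by blast
  have new: "close_open w (Suc k) S = X @ (Some (Suc k), b) # Y"
    using close_open_at[OF XY(2)] XY(1) by simp
  have "set (arc_vals X) \<union> {b} \<union> set (arc_vals Y) = {1..k}" using wf XY(1) unfolding arcs_wf_def by auto
  then have "b \<in> {1..k}" "Suc k \<notin> set (arc_vals X)" "Suc k \<notin> set (arc_vals Y)"
    by (metis Un_iff insertI1 atLeastAtMost_iff Suc_n_not_le_n)+
  moreover have "successively arc_rel X" "successively arc_rel Y" "\<forall>x\<in>set X. arc_rel x x"
    "\<forall>x\<in>set Y. arc_rel x x" "Y = [] \<or> arc_rel (None, b) (hd Y)"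
    using wf XY(1) unfolding arcs_wf_def arcs_sorted_def
    by (auto simp: successively_append_iff successively_Cons)
  moreover have "X = [] \<or> snd (last X) < Suc k"
  proof (cases "X = []")
    case False
    then have "last X \<in> set S" using XY(1) by simp
    then show ?thesis using arc_vals_mem[of "last X" S] wf unfolding arcs_wf_def by auto
  qed simp
  ultimately show ?thesis using wf XY(1) unfolding new arcs_wf_def arcs_sorted_def
    by (auto simp: successively_append_iff successively_Cons arc_rel_def split: option.splits)
qed

definition build_inv :: "step list \<times> nat list \<Rightarrow> nat \<Rightarrow> bool" where
  "build_inv Hi k \<longleftrightarrow> int (open_count (build_arcs Hi k)) = height (fst Hi) (Suc k)
    \<and> arcs_wf k (build_arcs Hi k)"

lemma build_inv_Suc:
  assumes v: "dyck_history N Hi" and k: "k < N" and I: "build_inv Hi k"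
  shows "build_inv Hi (Suc k)"
proof -
  define S where "S = build_arcs Hi k"
  define s where "s = fst Hi ! k"
  define w where "w = snd Hi ! k"
  have B: "build_arcs Hi (Suc k) = arc_step s w (Suc k) S" by (simp add: S_def s_def w_def)
  have sUD: "s = U \<or> s = D" using v k nth_U_or_D[of "fst Hi" k] unfolding dyck_history_def s_def by auto
  have hs: "height (fst Hi) (Suc (Suc k)) = height (fst Hi) (Suc k) + (if s = U then 1 else -1)"
    using height_Suc[of "Suc k" "fst Hi"] v k sUD unfolding dyck_history_def s_def by auto
  have hS: "int (open_count S) = height (fst Hi) (Suc k)" and wf: "arcs_wf k S"
    using I unfolding build_inv_def S_def by auto
  have "s = U \<Longrightarrow> int w \<le> height (fst Hi) (Suc k)" "s = D \<Longrightarrow> int w \<le> height (fst Hi) (Suc k) - 1"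
    using v k unfolding dyck_history_def s_def w_def by (auto dest: bspec[of _ _ "Suc k"])
  then show ?thesis
    using sUD arcs_wf_insert_open[OF wf, of w] arcs_wf_close_open[OF wf, of w] hS hs
      open_count_insert_open[of w "Suc k" S] open_count_close_open[of w S "Suc k"]
    unfolding build_inv_def B arc_step_def by auto
qed

lemma build_inv_all: "dyck_history N Hi \<Longrightarrow> k \<le> N \<Longrightarrow> build_inv Hi k"
proof (induction k)
  case 0
  then show ?case by (simp add: build_inv_def arcs_wf_def arcs_sorted_def)
next
  case (Suc k)
  then show ?case using build_inv_Suc[of N Hi k] by simp
qed

lemma dyck_history_step_fits:
  assumes v: "dyck_history N Hi" and k: "k < N"
  shows "(fst Hi ! k = U \<and> snd Hi ! k \<le> open_count (build_arcs Hi k))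
    \<or> (fst Hi ! k = D \<and> snd Hi ! k < open_count (build_arcs Hi k))"
proof -
  have "int (open_count (build_arcs Hi k)) = height (fst Hi) (Suc k)"
    using build_inv_all[OF v] k unfolding build_inv_def by simp
  moreover have "fst Hi ! k = U \<or> fst Hi ! k = D"
    using v k nth_U_or_D[of "fst Hi" k] unfolding dyck_history_def by simp
  moreover have "(fst Hi ! k = U \<longrightarrow> int (snd Hi ! k) \<le> height (fst Hi) (Suc k))
      \<and> (fst Hi ! k = D \<longrightarrow> int (snd Hi ! k) \<le> height (fst Hi) (Suc k) - 1)"
    using v k unfolding dyck_history_def by (auto dest: bspec[of _ _ "Suc k"])
  ultimately show ?thesis by auto
qed

lemma build_arcs_fresh:
  assumes "dyck_history N Hi" "k < N" "x \<in> set (build_arcs Hi k)"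
  shows "snd x \<noteq> Suc k \<and> fst x \<noteq> Some (Suc k)"
  using arc_vals_mem[OF assms(3)] build_inv_all[OF assms(1), of k] assms(2)
  unfolding build_inv_def arcs_wf_def by force

lemma build_arcs_inj:
  assumes v: "dyck_history N H1" "dyck_history N H2" and eq: "\<And>k. k \<le> N \<Longrightarrow> build_arcs H1 k = build_arcs H2 k"
  shows "H1 = H2"
proof -
  have "fst H1 ! k = fst H2 ! k \<and> snd H1 ! k = snd H2 ! k" if k: "k < N" for k
  proof (rule arc_step_inj)
    show "(fst H1 ! k = U \<and> snd H1 ! k \<le> open_count (build_arcs H1 k))
      \<or> (fst H1 ! k = D \<and> snd H1 ! k < open_count (build_arcs H1 k))"
      using dyck_history_step_fits[OF v(1) k] .
    show "(fst H2 ! k = U \<and> snd H2 ! k \<le> open_count (build_arcs H1 k))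
      \<or> (fst H2 ! k = D \<and> snd H2 ! k < open_count (build_arcs H1 k))"
      using dyck_history_step_fits[OF v(2) k] eq[of k] k by simp
    show "\<forall>x\<in>set (build_arcs H1 k). snd x \<noteq> Suc k \<and> fst x \<noteq> Some (Suc k)"
      using build_arcs_fresh[OF v(1) k] by blast
    show "arc_step (fst H1 ! k) (snd H1 ! k) (Suc k) (build_arcs H1 k)
      = arc_step (fst H2 ! k) (snd H2 ! k) (Suc k) (build_arcs H1 k)"
      using eq[of k] eq[of "Suc k"] k by simp
  qed
  then show ?thesis using v unfolding dyck_history_def by (simp add: prod_eq_iff list_eq_iff_nth_eq)
qed

definition arcs_restrict :: "nat \<Rightarrow> arcs \<Rightarrow> arcs" where
  "arcs_restrict t S = map (\<lambda>(a,b). (case a of None \<Rightarrow> None | Some a' \<Rightarrow> if a' < t then Some a' else None, b))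
     (filter (\<lambda>(a,b). b < t) S)"

lemma arcs_restrict_simps[simp]: "arcs_restrict t [] = []" "arcs_restrict t (xs @ ys) = arcs_restrict t xs @ arcs_restrict t ys"
  "arcs_restrict t ((a,b) # ys) = (if b < t then (case a of None \<Rightarrow> None | Some a' \<Rightarrow> if a' < t then Some a' else None, b)
      # arcs_restrict t ys else arcs_restrict t ys)"
  by (auto simp: arcs_restrict_def)

lemma arcs_restrict_id: "(\<forall>v\<in>set (arc_vals S). v < t) \<Longrightarrow> arcs_restrict t S = S"
proof (induction S)
  case Nil
  then show ?case by simp
next
  case (Cons x S)
  then show ?case by (cases x) (auto split: option.splits)
qed

lemma arcs_restrict_arc_step: "t \<le> s \<Longrightarrow> arcs_restrict t (arc_step x w s S) = arcs_restrict t S"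
proof -
  assume ts: "t \<le> s"
  show ?thesis
  proof (cases "x = U")
    case True
    obtain X Y where "S = X @ Y" "insert_open w (None, s) S = X @ (None, s) # Y" using insert_open_cases by blast
    then show ?thesis using True ts by (simp add: arc_step_def)
  next
    case False
    from close_open_cases[of w s S] show ?thesis
    proof
      assume "close_open w s S = S" then show ?thesis using False by (simp add: arc_step_def)
    next
      assume "\<exists>X b Y. S = X @ (None, b) # Y \<and> close_open w s S = X @ (Some s, b) # Y"
      then obtain X b Y where "S = X @ (None, b) # Y" "close_open w s S = X @ (Some s, b) # Y" by blast
      then show ?thesis using False ts by (simp add: arc_step_def)
    qed
  qed
qed

lemma arcs_restrict_build: "dyck_history N Hi \<Longrightarrow> k + d \<le> N \<Longrightarrow>
    arcs_restrict (Suc k) (build_arcs Hi (k + d)) = build_arcs Hi k"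
proof (induction d)
  case 0
  have "set (arc_vals (build_arcs Hi k)) = {1..k}" using build_inv_all[OF 0(1), of k] 0(2) unfolding build_inv_def arcs_wf_def by simp
  then show ?case by (simp add: arcs_restrict_id)
next
  case (Suc d)
  then show ?case using arcs_restrict_arc_step[of "Suc k" "Suc (k + d)"] by simp
qed

definition arcs_pairs :: "arcs \<Rightarrow> (nat \<times> nat) list" where
  "arcs_pairs S = map (\<lambda>(a,b). (the a, b)) S"

lemma map_Some_arcs_pairs: "\<forall>x\<in>set S. fst x \<noteq> None \<Longrightarrow>
    map (\<lambda>(a,b). (Some a, b)) (arcs_pairs S) = S"
  by (induction S) (auto simp: arcs_pairs_def)

lemma pair_vals_arcs_pairs: "\<forall>x\<in>set S. fst x \<noteq> None \<Longrightarrow> pair_vals (arcs_pairs S) = arc_vals S"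
  by (induction S) (auto simp: arcs_pairs_def)

lemma alternation_arcs_pairs: "\<forall>x\<in>set S. fst x \<noteq> None \<Longrightarrow> arcs_sorted S \<Longrightarrow>
   successively (\<lambda>x y. snd x < fst y) (arcs_pairs S) \<and> (\<forall>x\<in>set (arcs_pairs S). snd x < fst x)"
proof (induction S)
  case Nil
  then show ?case by (simp add: arcs_pairs_def)
next
  case (Cons x S)
  have a: "arcs_sorted S" using Cons.prems unfolding arcs_sorted_def by (auto simp: successively_Cons)
  have h: "S \<noteq> [] \<Longrightarrow> arc_rel x (hd S)" "arc_rel x x"
    using Cons.prems unfolding arcs_sorted_def by (auto simp: successively_Cons)
  have "S \<noteq> [] \<Longrightarrow> fst (hd S) \<noteq> None" using Cons.prems by simp
  then show ?case using Cons.IH[OF _ a] Cons.prems h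
    by (cases x; cases S) (auto simp: arcs_pairs_def arc_rel_def successively_Cons)
qed

lemma pair_history_surj:
  assumes v: "dyck_history N Hi"
  shows "\<exists>ps. alt_pairs N ps \<and> pair_history N ps = Hi"
proof -
  define S where "S = build_arcs Hi N"
  have I: "build_inv Hi N" using build_inv_all[OF v] by simp
  then have "open_count S = 0" using v unfolding build_inv_def dyck_history_def S_def by simp
  then have closed: "\<forall>x\<in>set S. fst x \<noteq> None" by (auto simp: open_count_def filter_empty_conv)
  define ps where "ps = arcs_pairs S"
  have g: "alt_pairs N ps" unfolding alt_pairs_def ps_def
    using pair_vals_arcs_pairs[OF closed] alternation_arcs_pairs[OF closed] I
    unfolding build_inv_def arcs_wf_def S_def by auto
  have "arcs_below (Suc k) ps = build_arcs Hi k" if "k \<le> N" for k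
  proof -
    have "arcs_below (Suc k) ps = arcs_restrict (Suc k) (map (\<lambda>(a,b). (Some a, b)) ps)"
      by (induction ps) (auto simp: arcs_below_def arcs_restrict_def)
    also have "\<dots> = arcs_restrict (Suc k) S" using map_Some_arcs_pairs[OF closed] ps_def by simp
    also have "\<dots> = build_arcs Hi k" using arcs_restrict_build[OF v, of k "N - k"] that S_def by simp
    finally show ?thesis .
  qed
  then have "pair_history N ps = Hi"
    using build_arcs_inj[OF dyck_history_pair_history[OF g] v] arcs_below_eq_build[OF g] by simp
  then show ?thesis using g by blast
qed

section \<open>Reverse-complement\<close>

definition compl_pair :: "nat \<Rightarrow> nat \<times> nat \<Rightarrow> nat \<times> nat" where
  "compl_pair N p = (N + 1 - snd p, N + 1 - fst p)"

definition rc_pairs :: "nat \<Rightarrow> (nat \<times> nat) list \<Rightarrow> (nat \<times> nat) list" where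
  "rc_pairs N ps = rev (map (compl_pair N) ps)"

lemma pair_vals_rc_pairs: "pair_vals (rc_pairs N ps) = rev (map (\<lambda>v. N + 1 - v) (pair_vals ps))"
  by (induction ps rule: pair_vals.induct) (auto simp: rc_pairs_def compl_pair_def)

lemma pair_weight_Cons: "pair_weight ((a,b)#xs) t =
    (if a \<noteq> t \<and> b \<noteq> t then (if b < t \<and> t < a then 1 else 0) + pair_weight xs t else 0)"
  by (auto simp: pair_weight_def straddle_count_def)

lemma pair_weight_map_compl_pair: "\<forall>p\<in>set qs. fst p \<in> {1..N} \<and> snd p \<in> {1..N} \<Longrightarrow> t \<in> {1..N} \<Longrightarrow>
  pair_weight (map (compl_pair N) qs) (N + 1 - t) = pair_weight qs t"
proof (induction qs)
  case Nil
  then show ?case by (simp add: pair_weight_def straddle_count_def)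
next
  case (Cons p qs)
  obtain a b where p: "p = (a,b)" by force
  have r: "a \<in> {1..N}" "b \<in> {1..N}" using Cons.prems p by auto
  have "map (compl_pair N) (p # qs) = (N + 1 - b, N + 1 - a) # map (compl_pair N) qs" by (simp add: p compl_pair_def)
  then show ?case using Cons r p by (auto simp add: pair_weight_Cons)
qed

lemma image_compl_atLeastAtMost: "(\<lambda>v. N + 1 - v) ` {1..N} = {1..(N::nat)}"
proof
  show "(\<lambda>v. N + 1 - v) ` {1..N} \<subseteq> {1..N}" by auto
  show "{1..N} \<subseteq> (\<lambda>v. N + 1 - v) ` {1..N}"
  proof
    fix x assume "x \<in> {1..N}"
    then show "x \<in> (\<lambda>v. N + 1 - v) ` {1..N}" by (intro image_eqI[of _ _ "N + 1 - x"]) auto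
  qed
qed

lemma alt_pairs_rc_pairs: "alt_pairs N ps \<Longrightarrow> alt_pairs N (rc_pairs N ps)"
proof -
  assume g: "alt_pairs N ps"
  have rng: "\<And>p. p \<in> set ps \<Longrightarrow> fst p \<in> {1..N} \<and> snd p \<in> {1..N}"
    using alt_pairs_range[OF g] by blast
  have s1: "successively (\<lambda>x y. snd x < fst y) (rc_pairs N ps)"
  proof -
    have "successively (\<lambda>x y. snd x < fst y) ps" using g unfolding alt_pairs_def by simp
    then have "successively (\<lambda>x y. snd (compl_pair N y) < fst (compl_pair N x)) ps"
      by (rule successively_mono) (auto simp: compl_pair_def dest!: rng)
    then show ?thesis by (simp add: rc_pairs_def successively_map)
  qed
  have s2: "\<forall>x\<in>set (rc_pairs N ps). snd x < fst x"
    using g rng unfolding alt_pairs_def rc_pairs_def compl_pair_def by fastforce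
  have d: "distinct (pair_vals (rc_pairs N ps))"
  proof -
    have "inj_on (\<lambda>v. N + 1 - v) (set (pair_vals ps))" using g unfolding alt_pairs_def by (auto simp: inj_on_def)
    then show ?thesis using g unfolding alt_pairs_def pair_vals_rc_pairs by (simp add: distinct_map)
  qed
  have "set (pair_vals (rc_pairs N ps)) = {1..N}"
    using g unfolding alt_pairs_def pair_vals_rc_pairs using image_compl_atLeastAtMost[of N] by simp
  then show ?thesis using s1 s2 d unfolding alt_pairs_def by simp
qed

lemma peaks_valleys_disjoint: "distinct (pair_vals ps) \<Longrightarrow> fst ` set ps \<inter> snd ` set ps = {}"
proof (induction ps rule: pair_vals.induct)
  case 1
  then show ?case by simp
next
  case (2 a b ps)
  then show ?case by (force simp: set_pair_vals)
qed

lemma snd_rc_pairs_iff: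
  assumes g: "alt_pairs N ps" and t: "t \<in> {1..N}"
  shows "t \<in> snd ` set (rc_pairs N ps) \<longleftrightarrow> N + 1 - t \<in> fst ` set ps"
proof
  assume "t \<in> snd ` set (rc_pairs N ps)"
  then obtain p where "p \<in> set ps" "t = N + 1 - fst p" by (auto simp: rc_pairs_def compl_pair_def)
  moreover have "fst p \<in> {1..N}" using alt_pairs_range[OF g \<open>p \<in> set ps\<close>] by simp
  ultimately show "N + 1 - t \<in> fst ` set ps" by force
next
  assume "N + 1 - t \<in> fst ` set ps"
  then obtain p where "p \<in> set ps" "fst p = N + 1 - t" by auto
  then have "compl_pair N p \<in> set (rc_pairs N ps)" "snd (compl_pair N p) = t"
    using t by (auto simp: rc_pairs_def compl_pair_def)
  then show "t \<in> snd ` set (rc_pairs N ps)" by force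
qed

lemma rc_weight_pair_history:
  assumes g: "alt_pairs N ps" and t: "t \<in> {1..N}"
  shows "rc_weight (pair_history N ps) t = pair_weight (rev ps) t"
proof -
  have "t - 1 < N" "Suc (t - 1) = t" using t by auto
  then show ?thesis
    using nth_pair_history[of "t - 1" N ps] height_pair_history[OF g, of t] open_count_arcs_below[OF g t] t
    unfolding rc_weight_def by (cases "t \<in> snd ` set ps") auto
qed

lemma rc_pair_history:
  assumes g: "alt_pairs N ps"
  shows "rc (pair_history N ps) = pair_history N (rc_pairs N ps)"
proof -
  have disj: "fst ` set ps \<inter> snd ` set ps = {}" and cover: "fst ` set ps \<union> snd ` set ps = {1..N}"
    using g peaks_valleys_disjoint unfolding alt_pairs_def set_pair_vals by auto
  have "rev (map flip (fst (pair_history N ps))) ! i = fst (pair_history N (rc_pairs N ps)) ! i" if i: "i < N" for i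
  proof -
    have "N - i \<in> {1..N}" "N + 1 - Suc i = N - i" "Suc (N - Suc i) = N - i" using i by auto
    then show ?thesis
      using i nth_pair_history(1)[of "N - Suc i" N ps] nth_pair_history(1)[of i N "rc_pairs N ps"]
        snd_rc_pairs_iff[OF g, of "Suc i"] disj cover
      by (auto simp: rev_nth)
  qed
  moreover have "rev (map (rc_weight (pair_history N ps)) [1..<N + 1]) ! i = snd (pair_history N (rc_pairs N ps)) ! i"
    if i: "i < N" for i
  proof -
    have t: "N - i \<in> {1..N}" and "N + 1 - (N - i) = Suc i" using i by auto
    have "pair_weight (rev ps) (N - i) = pair_weight (rc_pairs N ps) (Suc i)"
      using pair_weight_map_compl_pair[of "rev ps" N "N - i"] t alt_pairs_range[OF g] \<open>N + 1 - (N - i) = Suc i\<close>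
      by (simp add: rc_pairs_def rev_map)
    then show ?thesis
      using i rc_weight_pair_history[OF g t] nth_pair_history(2)[OF i]
      by (simp add: rev_nth Suc_diff_Suc del: upt_Suc)
  qed
  ultimately show ?thesis by (simp add: rc_eq prod_eq_iff list_eq_iff_nth_eq del: upt_Suc)
qed

section \<open>Alternating permutations\<close>

definition perm_pairs :: "nat \<Rightarrow> (nat \<Rightarrow> nat) \<Rightarrow> (nat \<times> nat) list" where
  "perm_pairs n p = map (\<lambda>m. (p (2*m+1), p (2*m+2))) [0..<n]"

lemma length_perm_pairs[simp]: "length (perm_pairs n p) = n" by (simp add: perm_pairs_def)

lemma nth_perm_pairs: "m < n \<Longrightarrow> perm_pairs n p ! m = (p (2*m+1), p (2*m+2))" by (simp add: perm_pairs_def)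

lemma pair_vals_perm_pairs: "pair_vals (perm_pairs n p) = map p [1..<2*n+1]"
proof (induction n)
  case 0
  then show ?case by (simp add: perm_pairs_def)
next
  case (Suc n)
  have "perm_pairs (Suc n) p = perm_pairs n p @ [(p (2*n+1), p (2*n+2))]" by (simp add: perm_pairs_def)
  moreover have "[1..<2 * Suc n + 1] = [1..<2*n+1] @ [2*n+1, 2*n+2]"
    by (simp add: upt_Suc_append[symmetric] numeral_2_eq_2)
  ultimately show ?case using Suc by simp
qed

lemma alt_pairs_perm_pairs:
  assumes pm: "p permutes {1..2*n}" and al: "alternating (2*n) p"
  shows "alt_pairs (2*n) (perm_pairs n p)"
proof -
  have s1: "successively (\<lambda>x y. snd x < fst y) (perm_pairs n p)"
    unfolding successively_conv_nth
  proof (intro allI impI)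
    fix i assume "Suc i < length (perm_pairs n p)"
    then have i: "Suc i < n" by simp
    have "2*i+2 \<in> {1..<2*n}" "even (2*i+2)" using i by auto
    then have "p (2*i+2) < p (Suc (2*i+2))" using al unfolding alternating_def by blast
    then show "snd (perm_pairs n p ! i) < fst (perm_pairs n p ! Suc i)" using i by (simp add: nth_perm_pairs)
  qed
  have s2: "\<forall>x\<in>set (perm_pairs n p). snd x < fst x"
  proof
    fix x assume "x \<in> set (perm_pairs n p)"
    then obtain m where m: "m < n" "x = perm_pairs n p ! m" by (auto simp: in_set_conv_nth)
    have "2*m+1 \<in> {1..<2*n}" "odd (2*m+1)" using m by auto
    then have "p (2*m+1) > p (Suc (2*m+1))" using al unfolding alternating_def by blast
    then show "snd x < fst x" using m by (simp add: nth_perm_pairs)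
  qed
  have d: "distinct (pair_vals (perm_pairs n p))"
    unfolding pair_vals_perm_pairs using permutes_inj_on[OF pm] by (simp add: distinct_map)
  have "set (pair_vals (perm_pairs n p)) = p ` {1..2*n}"
    unfolding pair_vals_perm_pairs by (simp add: atLeastLessThanSuc_atLeastAtMost del: upt_Suc)
  also have "\<dots> = {1..2*n}" using permutes_image[OF pm] .
  finally show ?thesis using s1 s2 d unfolding alt_pairs_def by simp
qed

lemma perm_pairs_inj:
  assumes "p permutes {1..2*n}" "q permutes {1..2*n}" "perm_pairs n p = perm_pairs n q"
  shows "p = q"
proof
  fix j
  have "map p [1..<2*n+1] = map q [1..<2*n+1]" using assms(3) pair_vals_perm_pairs by metis
  then have "\<forall>x\<in>{1..2*n}. p x = q x" by (simp add: atLeastLessThanSuc_atLeastAtMost del: upt_Suc)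
  then show "p j = q j" using permutes_not_in[OF assms(1)] permutes_not_in[OF assms(2)] by metis
qed

lemma alternating_of_perm_pairs:
  assumes s: "successively (\<lambda>x y. snd x < fst y) (perm_pairs n p)" and f: "\<forall>x\<in>set (perm_pairs n p). snd x < fst x"
  shows "alternating (2*n) p"
  unfolding alternating_def
proof
  fix i assume i: "i \<in> {1..<2*n}"
  show "(odd i \<longrightarrow> p (Suc i) < p i) \<and> (even i \<longrightarrow> p i < p (Suc i))"
  proof (cases "odd i")
    case True
    then obtain m where m: "i = 2*m+1" by (metis oddE)
    then have "m < n" using i by auto
    then have "perm_pairs n p ! m \<in> set (perm_pairs n p)" by simp
    then show ?thesis using f True m \<open>m < n\<close> by (auto simp: nth_perm_pairs)
  next
    case False
    define m where "m = i div 2 - 1"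
    have m: "i = 2*m+2" using False i unfolding m_def by auto
    then have "Suc m < n" using i by auto
    then have "snd (perm_pairs n p ! m) < fst (perm_pairs n p ! Suc m)" using successively_nth[OF s] by simp
    then show ?thesis using False m \<open>Suc m < n\<close> by (auto simp: nth_perm_pairs)
  qed
qed

lemma nth_pair_vals: "m < length ps \<Longrightarrow> pair_vals ps ! (2*m) = fst (ps ! m) \<and> pair_vals ps ! (2*m+1) = snd (ps ! m)"
proof (induction ps arbitrary: m rule: pair_vals.induct)
  case 1
  then show ?case by simp
next
  case (2 a b ps)
  then show ?case by (cases m) auto
qed

lemma pair_vals_inj: "pair_vals ps = pair_vals qs \<Longrightarrow> ps = qs"
proof (induction ps arbitrary: qs rule: pair_vals.induct)
  case 1
  then show ?case by (cases qs rule: pair_vals.cases) auto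
next
  case (2 a b ps)
  then show ?case by (cases qs rule: pair_vals.cases) auto
qed

definition pairs_perm :: "nat \<Rightarrow> (nat \<times> nat) list \<Rightarrow> nat \<Rightarrow> nat" where
  "pairs_perm n ps j = (if j \<in> {1..2*n} then pair_vals ps ! (j - 1) else j)"

lemma length_alt_pairs: "alt_pairs N ps \<Longrightarrow> 2 * length ps = N"
  using distinct_card[of "pair_vals ps"] unfolding alt_pairs_def by simp

context
  fixes n :: nat and ps :: "(nat \<times> nat) list"
  assumes g: "alt_pairs (2*n) ps"
begin

lemma pairs_perm_permutes: "pairs_perm n ps permutes {1..2*n}"
proof (rule bij_imp_permutes)
  have len: "length (pair_vals ps) = 2*n" using length_alt_pairs[OF g] by simp
  have "bij_betw (\<lambda>j. j - 1) {1..2*n} {..<2*n}" by (rule bij_betwI[where g = Suc]) auto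
  moreover have "bij_betw ((!) (pair_vals ps)) {..<2*n} {1..2*n}"
    by (rule bij_betw_nth) (use g len in \<open>auto simp: alt_pairs_def\<close>)
  ultimately have "bij_betw ((!) (pair_vals ps) \<circ> (\<lambda>j. j - 1)) {1..2*n} {1..2*n}" by (rule bij_betw_trans)
  then show "bij_betw (pairs_perm n ps) {1..2*n} {1..2*n}"
    by (rule bij_betw_cong[THEN iffD1, rotated]) (simp add: pairs_perm_def)
qed (simp add: pairs_perm_def del: atLeastAtMost_iff)

lemma perm_pairs_pairs_perm: "perm_pairs n (pairs_perm n ps) = ps"
proof (rule nth_equalityI)
  have len: "length ps = n" using length_alt_pairs[OF g] by simp
  then show "length (perm_pairs n (pairs_perm n ps)) = length ps" by simp
  fix m assume "m < length (perm_pairs n (pairs_perm n ps))"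
  then have m: "m < n" by simp
  then have "pairs_perm n ps (2*m+1) = pair_vals ps ! (2*m)" "pairs_perm n ps (2*m+2) = pair_vals ps ! (2*m+1)"
    by (auto simp: pairs_perm_def)
  then show "perm_pairs n (pairs_perm n ps) ! m = ps ! m"
    using nth_pair_vals[of m ps] m len by (simp add: nth_perm_pairs)
qed

lemma alternating_pairs_perm: "alternating (2*n) (pairs_perm n ps)"
  by (rule alternating_of_perm_pairs) (use g perm_pairs_pairs_perm in \<open>auto simp: alt_pairs_def\<close>)

end

lemma rc_invariant_iff_nth:
  assumes pm: "p permutes {1..N}"
  shows "rc_invariant N p \<longleftrightarrow> (\<forall>i<N. N + 1 - p (N - i) = p (Suc i))"
proof -
  have rng: "j \<in> {1..N} \<Longrightarrow> p j \<in> {1..N}" for j using permutes_in_image[OF pm] by simp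
  have shift: "(\<forall>j\<in>{1..N}. P (j - 1)) \<longleftrightarrow> (\<forall>i<N. P i)" for P
    unfolding image_Suc_lessThan[symmetric] by auto
  have "rc_invariant N p \<longleftrightarrow> (\<forall>j\<in>{1..N}. N + 1 - p (N - (j - 1)) = p (Suc (j - 1)))"
    unfolding rc_invariant_def
  proof (rule ball_cong[OF refl])
    fix j assume j: "j \<in> {1..N}"
    have "N - (j - 1) = N + 1 - j" "Suc (j - 1) = j" "N + 1 - j \<in> {1..N}" using j by auto
    then show "p (N + 1 - j) = N + 1 - p j \<longleftrightarrow> N + 1 - p (N - (j - 1)) = p (Suc (j - 1))"
      using rng[of "N + 1 - j"] rng[OF j] by auto
  qed
  also have "\<dots> \<longleftrightarrow> (\<forall>i<N. N + 1 - p (N - i) = p (Suc i))"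
    by (rule shift[of "\<lambda>i. N + 1 - p (N - i) = p (Suc i)"])
  finally show ?thesis .
qed

lemma rc_invariant_iff_rc_pairs:
  assumes pm: "p permutes {1..2*n}"
  shows "rc_invariant (2*n) p \<longleftrightarrow> rc_pairs (2*n) (perm_pairs n p) = perm_pairs n p"
proof -
  let ?xs = "map p [1..<2*n+1]"
  have "rc_pairs (2*n) (perm_pairs n p) = perm_pairs n p \<longleftrightarrow> rev (map (\<lambda>v. 2*n + 1 - v) ?xs) = ?xs"
    using pair_vals_inj[of "rc_pairs (2*n) (perm_pairs n p)" "perm_pairs n p"]
      pair_vals_rc_pairs[of "2*n" "perm_pairs n p"] pair_vals_perm_pairs[of n p]
    by auto
  also have "\<dots> \<longleftrightarrow> (\<forall>i<2*n. 2*n + 1 - p (2*n - i) = p (Suc i))"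
    by (simp add: list_eq_iff_nth_eq rev_nth Suc_diff_Suc del: upt_Suc)
  finally show ?thesis using rc_invariant_iff_nth[OF pm] by simp
qed

lemma ext_eq_apply: "j \<in> {1..N} \<Longrightarrow> ext N p j = p j"
  by (simp add: ext_def)

context
  fixes n :: nat and p :: "nat \<Rightarrow> nat"
  assumes pm: "p permutes {1..2*n}" and al: "alternating (2*n) p"
begin

lemma ext_alternating:
  assumes j: "j \<in> {1..2*n}"
  shows "even j \<Longrightarrow> p j < ext (2*n) p (j - 1) \<and> p j < ext (2*n) p (Suc j)"
    and "odd j \<Longrightarrow> ext (2*n) p (j - 1) < p j \<and> ext (2*n) p (Suc j) < p j"
proof -
  have pj: "p j \<in> {1..2*n}" using permutes_in_image[OF pm] j by simp
  have desc: "i \<in> {1..<2*n} \<Longrightarrow> odd i \<Longrightarrow> p (Suc i) < p i"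
    and asc: "i \<in> {1..<2*n} \<Longrightarrow> even i \<Longrightarrow> p i < p (Suc i)" for i
    using al unfolding alternating_def by auto
  show "p j < ext (2*n) p (j - 1) \<and> p j < ext (2*n) p (Suc j)" if "even j"
  proof
    have "j \<ge> 2" using that j by (cases "j = 1") auto
    then have "j - 1 \<in> {1..<2*n}" "odd (j - 1)" "Suc (j - 1) = j" using that j by auto
    then show "p j < ext (2*n) p (j - 1)"
      using desc[of "j - 1"] by (simp add: ext_def)
    show "p j < ext (2*n) p (Suc j)"
      using asc[of j] that j pj by (cases "j = 2*n") (auto simp: ext_def)
  qed
  show "ext (2*n) p (j - 1) < p j \<and> ext (2*n) p (Suc j) < p j" if "odd j"
  proof
    show "ext (2*n) p (j - 1) < p j"
    proof (cases "j = 1")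
      case False
      then have "j - 1 \<in> {1..<2*n}" "even (j - 1)" "Suc (j - 1) = j" using that j by auto
      then show ?thesis using asc[of "j - 1"] by (simp add: ext_def)
    qed (use pj in \<open>simp add: ext_def\<close>)
    have "j \<noteq> 2*n" using that by auto
    then show "ext (2*n) p (Suc j) < p j"
      using desc[of j] that j by (simp add: ext_def)
  qed
qed

lemma inv_into_perm_apply: "j \<in> {1..2*n} \<Longrightarrow> inv_into {1..2*n} p (p j) = j"
  using inv_into_f_f[OF permutes_inj_on[OF pm]] .

lemma fz_step_alternating: "j \<in> {1..2*n} \<Longrightarrow> fz_step (2*n) p (p j) = (if even j then U else D)"
  using ext_alternating[of j] unfolding fz_step_def Let_def inv_into_perm_apply
  by (cases "even j") (auto simp: ext_eq_apply)

lemma fz_weight_alternating: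
  assumes j: "j \<in> {1..2*n}"
  shows "fz_weight (2*n) p (p j) = card {i. i < (j - 1) div 2 \<and> p (2*i+2) < p j \<and> p j < p (2*i+1)}"
proof -
  let ?Q = "\<lambda>i. p (2*i+2) < p j \<and> p j < p (2*i+1)"
  have "{k \<in> {1..<j}. ext (2*n) p k < p j \<and> p j < ext (2*n) p (k - 1)}
      = (\<lambda>i. 2*i+2) ` {i. i < (j - 1) div 2 \<and> ?Q i}"
  proof (intro equalityI subsetI)
    fix k assume k: "k \<in> {k \<in> {1..<j}. ext (2*n) p k < p j \<and> p j < ext (2*n) p (k - 1)}"
    then have kr: "k \<in> {1..2*n}" using j by auto
    then have "even k"
      using ext_alternating(2)[OF kr] k by (auto simp: ext_eq_apply)
    moreover have "k \<noteq> 1" using kr \<open>even k\<close> by auto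
    define i where "i = k div 2 - 1"
    ultimately have ki: "k = 2*i+2" using kr unfolding i_def by auto
    have "i < (j - 1) div 2" using ki k by auto
    moreover have "?Q i" using k kr unfolding ki by (auto simp: ext_eq_apply)
    ultimately show "k \<in> (\<lambda>i. 2*i+2) ` {i. i < (j - 1) div 2 \<and> ?Q i}" using ki by blast
  next
    fix k assume "k \<in> (\<lambda>i. 2*i+2) ` {i. i < (j - 1) div 2 \<and> ?Q i}"
    then obtain i where "i < (j - 1) div 2" "?Q i" "k = 2*i+2" by auto
    then show "k \<in> {k \<in> {1..<j}. ext (2*n) p k < p j \<and> p j < ext (2*n) p (k - 1)}"
      using j by (auto simp: ext_eq_apply)
  qed
  then show ?thesis
    unfolding fz_weight_def Let_def inv_into_perm_apply[OF j]
    by (simp add: card_image inj_on_def)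
qed

lemma snd_perm_pairs_iff:
  assumes j: "j \<in> {1..2*n}"
  shows "p j \<in> snd ` set (perm_pairs n p) \<longleftrightarrow> even j"
proof
  assume "p j \<in> snd ` set (perm_pairs n p)"
  then obtain m where m: "m < n" "p j = p (2*m+2)" by (auto simp: perm_pairs_def)
  then have "2*m+2 \<in> {1..2*n}" by auto
  then have "j = 2*m+2" using inj_onD[OF permutes_inj_on[OF pm] m(2) j] by simp
  then show "even j" by simp
next
  assume "even j"
  then have "j = 2*(j div 2 - 1) + 2" "j div 2 - 1 < n" using j by (cases "j = 1"; auto)+
  then show "p j \<in> snd ` set (perm_pairs n p)" by (force simp: perm_pairs_def)
qed

lemma pair_weight_perm_pairs:
  assumes j: "j \<in> {1..2*n}"
  shows "pair_weight (perm_pairs n p) (p j) = card {i. i < (j - 1) div 2 \<and> p (2*i+2) < p j \<and> p j < p (2*i+1)}"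
proof -
  define m0 where "m0 = (j - 1) div 2"
  have m0n: "m0 < n" using j m0_def by auto
  have peq: "x \<in> {1..2*n} \<Longrightarrow> p x = p j \<Longrightarrow> x = j" for x
    using inj_onD[OF permutes_inj_on[OF pm]] j by blast
  have "takeWhile (\<lambda>(a,b). a \<noteq> p j \<and> b \<noteq> p j) (perm_pairs n p) = take m0 (perm_pairs n p)"
  proof (rule takeWhile_eq_take_P_nth)
    fix i assume "i < m0" "i < length (perm_pairs n p)"
    then have "2*i+1 \<in> {1..2*n}" "2*i+2 \<in> {1..2*n}" "2*i+1 \<noteq> j" "2*i+2 \<noteq> j" "i < n"
      using m0_def j by auto
    then show "(\<lambda>(a,b). a \<noteq> p j \<and> b \<noteq> p j) (perm_pairs n p ! i)"
      using peq by (auto simp: nth_perm_pairs)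
  next
    have "j = 2*m0+1 \<or> j = 2*m0+2" using j m0_def by auto
    then show "\<not> (\<lambda>(a,b). a \<noteq> p j \<and> b \<noteq> p j) (perm_pairs n p ! m0)"
      using m0n by (auto simp: nth_perm_pairs)
  qed
  then have "pair_weight (perm_pairs n p) (p j) = length (filter (\<lambda>(a,b). b < p j \<and> p j < a) (take m0 (perm_pairs n p)))"
    unfolding pair_weight_def straddle_count_def by simp
  also have "\<dots> = card {i. i < m0 \<and> p (2*i+2) < p j \<and> p j < p (2*i+1)}"
    unfolding length_filter_conv_card using m0n
    by (intro arg_cong[where f = card]) (auto simp: nth_perm_pairs)
  finally show ?thesis unfolding m0_def .
qed

lemma PsiFZ_eq_pair_history: "PsiFZ (2*n) p = pair_history (2*n) (perm_pairs n p)"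
proof -
  have "fz_step (2*n) p t = (if t \<in> snd ` set (perm_pairs n p) then U else D)
       \<and> fz_weight (2*n) p t = pair_weight (perm_pairs n p) t" if "t \<in> {1..2*n}" for t
  proof -
    have "t \<in> p ` {1..2*n}" using permutes_image[OF pm] that by simp
    then obtain j where j: "j \<in> {1..2*n}" "t = p j" by blast
    show ?thesis unfolding j(2)
      using fz_step_alternating[OF j(1)] snd_perm_pairs_iff[OF j(1)]
        fz_weight_alternating[OF j(1)] pair_weight_perm_pairs[OF j(1)] by simp
  qed
  then have "\<forall>t\<in>set [1..<2*n+1]. fz_step (2*n) p t = (if t \<in> snd ` set (perm_pairs n p) then U else D)
       \<and> fz_weight (2*n) p t = pair_weight (perm_pairs n p) t"
    by (simp del: upt_Suc)
  then show ?thesis unfolding PsiFZ_def pair_history_def by (simp del: upt_Suc)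
qed

end

section \<open>rc-fixed Dyck histories and labeled ballot paths\<close>

lemma dyck_history_height_nonneg:
  assumes v: "dyck_history N Hi" and i: "1 \<le> i" "i \<le> Suc N"
  shows "0 \<le> height (fst Hi) i"
  using i
proof (induction i)
  case (Suc i)
  show ?case
  proof (cases "i = 0")
    case False
    have len: "i \<le> length (fst Hi)" using v Suc.prems unfolding dyck_history_def by simp
    then have "fst Hi ! (i - 1) = U \<or> fst Hi ! (i - 1) = D"
      using v False nth_U_or_D[of "fst Hi" "i - 1"] unfolding dyck_history_def by simp
    moreover have "fst Hi ! (i - 1) = D \<Longrightarrow> 1 \<le> height (fst Hi) i"
      using v Suc.prems False unfolding dyck_history_def
      by (fastforce dest: bspec[of _ _ i])
    ultimately show ?thesis using Suc.IH Suc.prems False len height_Suc[of i "fst Hi"] by auto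
  qed simp
qed simp

definition first_half :: "nat \<Rightarrow> step list \<times> nat list \<Rightarrow> step list \<times> nat list" where
  "first_half n Hi = (take n (fst Hi), take n (snd Hi))"

lemma first_half_in_LBP:
  assumes v: "dyck_history (2*n) Hi"
  shows "first_half n Hi \<in> LBP n"
proof -
  obtain M W where Hi: "Hi = (M, W)" by force
  have lM: "length M = 2*n" "length W = 2*n" and sM: "set M \<subseteq> {U, D}"
    and bnd: "\<forall>i\<in>{1..2*n}. (M ! (i - 1) = U \<longrightarrow> int (W ! (i - 1)) \<le> height M i) \<and>
                  (M ! (i - 1) = D \<longrightarrow> int (W ! (i - 1)) \<le> height M i - 1)"
    using v unfolding dyck_history_def Hi by auto
  have "ballot_path (take n M)"
    unfolding ballot_path_def
    using sM set_take_subset[of n M] dyck_history_height_nonneg[OF v] lM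
    by (auto simp: Hi height_take)
  moreover have "\<forall>i\<in>{1..n}. (take n M ! (i - 1) = U \<longrightarrow> int (take n W ! (i - 1)) \<le> height (take n M) i) \<and>
                  (take n M ! (i - 1) = D \<longrightarrow> int (take n W ! (i - 1)) \<le> height (take n M) i - 1)"
    using bnd by (auto simp: height_take)
  ultimately show ?thesis using lM unfolding LBP_def first_half_def Hi by auto
qed

definition rc_completion :: "step list \<times> nat list \<Rightarrow> step list \<times> nat list" where
  "rc_completion Hi = (fst Hi @ fst (rc Hi), snd Hi @ snd (rc Hi))"

context
  fixes n P w
  assumes lbp: "(P, w) \<in> LBP n"
begin

private lemma LBP_props:
  "length P = n" "length w = n" "set P \<subseteq> {U, D}"
  "k \<in> {1..n} \<Longrightarrow> P ! (k - 1) = U \<or> P ! (k - 1) = D"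
  "k \<in> {1..n} \<Longrightarrow> P ! (k - 1) = U \<Longrightarrow> int (w ! (k - 1)) \<le> height P k"
  "k \<in> {1..n} \<Longrightarrow> P ! (k - 1) = D \<Longrightarrow> int (w ! (k - 1)) \<le> height P k - 1"
proof -
  show "length P = n" "length w = n" "set P \<subseteq> {U, D}"
    using lbp unfolding LBP_def ballot_path_def by auto
  then show "k \<in> {1..n} \<Longrightarrow> P ! (k - 1) = U \<or> P ! (k - 1) = D"
    using nth_U_or_D[of P "k - 1"] by auto
  show "k \<in> {1..n} \<Longrightarrow> P ! (k - 1) = U \<Longrightarrow> int (w ! (k - 1)) \<le> height P k"
    "k \<in> {1..n} \<Longrightarrow> P ! (k - 1) = D \<Longrightarrow> int (w ! (k - 1)) \<le> height P k - 1"
    using lbp unfolding LBP_def by auto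
qed

private lemma rc_weight_LBP:
  "k \<in> {1..n} \<Longrightarrow> int (rc_weight (P, w) k) =
     (if P ! (k - 1) = U then height P k - int (w ! (k - 1)) else height P k - 1 - int (w ! (k - 1)))"
  using LBP_props(4-6)[of k] unfolding rc_weight_def by auto

private lemma rc_completion_eq:
  "rc_completion (P, w) = (P @ rev (map flip P), w @ rev (map (rc_weight (P, w)) [1..<n+1]))"
  using LBP_props(1) by (simp add: rc_completion_def rc_eq del: upt_Suc)

private lemma rc_completion_first_half:
  "i \<in> {1..n} \<Longrightarrow> fst (rc_completion (P, w)) ! (i - 1) = P ! (i - 1)
     \<and> snd (rc_completion (P, w)) ! (i - 1) = w ! (i - 1)
     \<and> height (fst (rc_completion (P, w))) i = height P i"
  using LBP_props(1,2) by (auto simp: rc_completion_eq nth_append height_append)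

private lemma rc_completion_second_half:
  assumes k: "k \<in> {1..n}"
  shows "fst (rc_completion (P, w)) ! (2*n - k) = flip (P ! (k - 1))
     \<and> snd (rc_completion (P, w)) ! (2*n - k) = rc_weight (P, w) k
     \<and> height (fst (rc_completion (P, w))) (2*n + 1 - k) = height P (Suc k)"
proof -
  have "n - Suc (n - k) = k - 1" "Suc (k - 1) = k" "\<not> 2*n - k < n" "2*n - k - n = n - k"
    using k by auto
  then show ?thesis
    using k LBP_props(1,2) height_append_mirror[of k P]
    by (simp add: rc_completion_eq nth_append rev_nth del: upt_Suc)
qed

private lemma height_Suc_LBP:
  "k \<in> {1..n} \<Longrightarrow> height P (Suc k) = height P k + (if P ! (k - 1) = U then 1 else -1)"
  using height_Suc[of k P] LBP_props(1) LBP_props(4)[of k] by auto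

lemma dyck_history_rc_completion: "dyck_history (2*n) (rc_completion (P, w))"
proof -
  define M where "M = fst (rc_completion (P, w))"
  define W where "W = snd (rc_completion (P, w))"
  have lM: "length M = 2*n" "length W = 2*n" using LBP_props(1,2) by (auto simp: M_def W_def rc_completion_eq)
  have "height M (Suc (2*n)) = 0"
    using height_append_mirror[of 0 P] LBP_props(1) by (simp add: M_def rc_completion_eq)
  moreover have "(M ! (i - 1) = U \<longrightarrow> int (W ! (i - 1)) \<le> height M i) \<and>
                  (M ! (i - 1) = D \<longrightarrow> int (W ! (i - 1)) \<le> height M i - 1)" if i: "i \<in> {1..2*n}" for i
  proof (cases "i \<le> n")
    case True
    then show ?thesis using rc_completion_first_half[of i] LBP_props(5,6)[of i] i
      unfolding M_def W_def by auto
  next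
    case False
    define k where "k = 2*n + 1 - i"
    have k: "k \<in> {1..n}" "i - 1 = 2*n - k" "i = 2*n + 1 - k" using False i k_def by auto
    show ?thesis using rc_completion_second_half[OF k(1)] rc_weight_LBP[OF k(1)] height_Suc_LBP[OF k(1)]
      unfolding M_def W_def k(2) by (subst (1 2) k(3)) auto
  qed
  ultimately show ?thesis
    using lM LBP_props(3) unfolding dyck_history_def M_def W_def by (auto simp: rc_completion_eq)
qed

private lemma rc_weight_rc_completion_first_half:
  "i \<in> {1..n} \<Longrightarrow> rc_weight (rc_completion (P, w)) i = rc_weight (P, w) i"
  using rc_completion_first_half[of i] unfolding rc_weight_def by simp

private lemma rc_weight_rc_completion_second_half:
  assumes k: "k \<in> {1..n}"
  shows "rc_weight (rc_completion (P, w)) (2*n + 1 - k) = w ! (k - 1)"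
proof -
  have "2*n + 1 - k - 1 = 2*n - k" using k by simp
  then show ?thesis
    using rc_completion_second_half[OF k] rc_weight_LBP[OF k] height_Suc_LBP[OF k] LBP_props(4)[OF k]
    unfolding rc_weight_def by auto
qed

lemma rc_rc_completion: "rc (rc_completion (P, w)) = rc_completion (P, w)"
proof -
  define M where "M = fst (rc_completion (P, w))"
  define W where "W = snd (rc_completion (P, w))"
  have lM: "length M = 2*n" "length W = 2*n" using LBP_props(1,2) by (auto simp: M_def W_def rc_completion_eq)
  have "rev (map flip M) = M" by (simp add: M_def rc_completion_eq rev_map o_def)
  moreover have "rev (map (rc_weight (M, W)) [1..<2*n + 1]) ! q = W ! q" if q: "q < 2*n" for q
  proof -
    have "rev (map (rc_weight (M, W)) [1..<2*n + 1]) ! q = rc_weight (M, W) (2*n - q)"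
      using q by (simp add: rev_nth Suc_diff_Suc del: upt_Suc)
    moreover have "rc_weight (M, W) (2*n - q) = W ! q"
    proof (cases "q < n")
      case True
      have k: "Suc q \<in> {1..n}" "2*n - q = 2*n + 1 - Suc q" using True by auto
      have "W ! q = w ! q" using True LBP_props(2) by (simp add: W_def rc_completion_eq nth_append)
      then show ?thesis using rc_weight_rc_completion_second_half[OF k(1)] unfolding k(2) M_def W_def by simp
    next
      case False
      have i: "2*n - q \<in> {1..n}" "2*n - (2*n - q) = q" using q False by auto
      show ?thesis using rc_weight_rc_completion_first_half[OF i(1)] rc_completion_second_half[OF i(1)]
        unfolding i(2) M_def W_def by simp
    qed
    ultimately show ?thesis by simp
  qed
  moreover have "rc_completion (P, w) = (M, W)" by (simp add: M_def W_def)
  ultimately show ?thesis using lM by (simp add: rc_eq list_eq_iff_nth_eq del: upt_Suc)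
qed

lemma first_half_rc_completion: "first_half n (rc_completion (P, w)) = (P, w)"
  using LBP_props(1,2) by (simp add: first_half_def rc_completion_eq)

end

lemma bij_betw_first_half:
  "bij_betw (first_half n) {Hi. dyck_history (2*n) Hi \<and> rc Hi = Hi} (LBP n)"
proof (rule bij_betwI')
  fix H1 H2 assume "H1 \<in> {Hi. dyck_history (2*n) Hi \<and> rc Hi = Hi}" "H2 \<in> {Hi. dyck_history (2*n) Hi \<and> rc Hi = Hi}"
  then show "(first_half n H1 = first_half n H2) = (H1 = H2)"
    using rc_fixed_eq_if_take_eq[of H1 n H2] unfolding dyck_history_def first_half_def by auto
next
  fix Hi assume "Hi \<in> {Hi. dyck_history (2*n) Hi \<and> rc Hi = Hi}"
  then show "first_half n Hi \<in> LBP n" using first_half_in_LBP by blast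
next
  fix x assume "x \<in> LBP n"
  then obtain P w where "x = (P, w)" "(P, w) \<in> LBP n" by (cases x) auto
  then show "\<exists>Hi\<in>{Hi. dyck_history (2*n) Hi \<and> rc Hi = Hi}. x = first_half n Hi"
    using dyck_history_rc_completion rc_rc_completion first_half_rc_completion
    by (intro bexI[of _ "rc_completion (P, w)"]) auto
qed

lemma bij_betw_fixpoints:
  assumes f: "bij_betw f A B" and g: "g ` A \<subseteq> A" and comm: "\<And>a. a \<in> A \<Longrightarrow> f (g a) = h (f a)"
  shows "bij_betw f {a \<in> A. g a = a} {b \<in> B. h b = b}"
proof (rule bij_betwI')
  show "(f x = f y) = (x = y)" if "x \<in> {a \<in> A. g a = a}" "y \<in> {a \<in> A. g a = a}" for x y
    using f that by (auto simp: bij_betw_def inj_on_def)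
  show "f x \<in> {b \<in> B. h b = b}" if "x \<in> {a \<in> A. g a = a}" for x
    using f that comm[of x] by (auto simp: bij_betw_def)
  show "\<exists>x\<in>{a \<in> A. g a = a}. y = f x" if "y \<in> {b \<in> B. h b = b}" for y
  proof -
    have "y \<in> f ` A" using f that by (auto simp: bij_betw_def)
    then obtain x where x: "x \<in> A" "y = f x" by blast
    have "f (g x) = f x" using comm[OF x(1)] x that by simp
    then have "g x = x" using f g x(1) by (auto simp: bij_betw_def inj_on_def)
    then show ?thesis using x by blast
  qed
qed

lemma bij_betw_perm_pairs:
  "bij_betw (perm_pairs n) {p. p permutes {1..2*n} \<and> alternating (2*n) p} {ps. alt_pairs (2*n) ps}"
proof (rule bij_betwI')
  show "(perm_pairs n p = perm_pairs n q) = (p = q)"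
    if "p \<in> {p. p permutes {1..2*n} \<and> alternating (2*n) p}"
      "q \<in> {p. p permutes {1..2*n} \<and> alternating (2*n) p}" for p q
    using perm_pairs_inj that by blast
  show "perm_pairs n p \<in> {ps. alt_pairs (2*n) ps}" if "p \<in> {p. p permutes {1..2*n} \<and> alternating (2*n) p}" for p
    using alt_pairs_perm_pairs that by blast
  show "\<exists>p\<in>{p. p permutes {1..2*n} \<and> alternating (2*n) p}. ps = perm_pairs n p"
    if "ps \<in> {ps. alt_pairs (2*n) ps}" for ps
    using pairs_perm_permutes perm_pairs_pairs_perm alternating_pairs_perm that
    by (intro bexI[of _ "pairs_perm n ps"]) auto
qed

lemma bij_betw_pair_history:
  "bij_betw (pair_history N) {ps. alt_pairs N ps} {Hi. dyck_history N Hi}"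
proof (rule bij_betwI')
  show "(pair_history N ps = pair_history N qs) = (ps = qs)"
    if "ps \<in> {ps. alt_pairs N ps}" "qs \<in> {ps. alt_pairs N ps}" for ps qs
    using pair_history_inj that by blast
  show "pair_history N ps \<in> {Hi. dyck_history N Hi}" if "ps \<in> {ps. alt_pairs N ps}" for ps
    using dyck_history_pair_history that by blast
  show "\<exists>ps\<in>{ps. alt_pairs N ps}. Hi = pair_history N ps" if "Hi \<in> {Hi. dyck_history N Hi}" for Hi
    using pair_history_surj[of N Hi] that by force
qed

lemma bij_betw_PsiFZ_RcAlt:
  "bij_betw (PsiFZ (2*n)) (RcAlt n) {Hi. dyck_history (2*n) Hi \<and> rc Hi = Hi}"
proof -
  define A where "A = {p. p permutes {1..2*n} \<and> alternating (2*n) p}"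
  have pairs: "bij_betw (perm_pairs n) A {ps. alt_pairs (2*n) ps}"
    unfolding A_def by (rule bij_betw_perm_pairs)
  have RcAlt: "RcAlt n = {p \<in> A. rc_pairs (2*n) (perm_pairs n p) = perm_pairs n p}"
    unfolding RcAlt_def A_def by (auto simp: rc_invariant_iff_rc_pairs)
  have "perm_pairs n ` RcAlt n = {ps \<in> perm_pairs n ` A. rc_pairs (2*n) ps = ps}"
    unfolding RcAlt by auto
  also have "perm_pairs n ` A = {ps. alt_pairs (2*n) ps}"
    using bij_betw_imp_surj_on[OF pairs] .
  finally have img: "perm_pairs n ` RcAlt n = {ps \<in> {ps. alt_pairs (2*n) ps}. rc_pairs (2*n) ps = ps}" .
  have "bij_betw (perm_pairs n) (RcAlt n) {ps \<in> {ps. alt_pairs (2*n) ps}. rc_pairs (2*n) ps = ps}"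
    by (rule bij_betw_subset[OF pairs _ img]) (auto simp: RcAlt)
  moreover have "bij_betw (pair_history (2*n)) {ps \<in> {ps. alt_pairs (2*n) ps}. rc_pairs (2*n) ps = ps}
      {Hi \<in> {Hi. dyck_history (2*n) Hi}. rc Hi = Hi}"
    by (rule bij_betw_fixpoints[OF bij_betw_pair_history]) (auto simp: alt_pairs_rc_pairs rc_pair_history)
  ultimately have "bij_betw (pair_history (2*n) \<circ> perm_pairs n) (RcAlt n) {Hi. dyck_history (2*n) Hi \<and> rc Hi = Hi}"
    by (simp add: bij_betw_trans)
  moreover have "PsiFZ (2*n) p = (pair_history (2*n) \<circ> perm_pairs n) p" if "p \<in> RcAlt n" for p
    using PsiFZ_eq_pair_history that unfolding RcAlt_def by auto
  ultimately show ?thesis using bij_betw_cong by blast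
qed

theorem mainTheorem5:
  fixes n :: nat
  assumes "n \<ge> 1"
  shows "(\<forall>p\<in>RcAlt n.
            set (fst (PsiFZ (2*n) p)) \<subseteq> {U, D}
          \<and> rc (PsiFZ (2*n) p) = PsiFZ (2*n) p
          \<and> Psi n p \<in> LBP n)
       \<and> bij_betw (Psi n) (RcAlt n) (LBP n)"
proof -
  have Psi: "Psi n = first_half n \<circ> PsiFZ (2*n)"
    by (auto simp: Psi_def first_half_def)
  have bij: "bij_betw (Psi n) (RcAlt n) (LBP n)"
    unfolding Psi by (rule bij_betw_trans[OF bij_betw_PsiFZ_RcAlt bij_betw_first_half])
  have "dyck_history (2*n) (PsiFZ (2*n) p) \<and> rc (PsiFZ (2*n) p) = PsiFZ (2*n) p" if "p \<in> RcAlt n" for p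
    using bij_betw_apply[OF bij_betw_PsiFZ_RcAlt that] by simp
  then show ?thesis using bij bij_betw_apply[OF bij] unfolding dyck_history_def by blast
qed

end
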